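(* Let $G$ be an equationally Noetherian group with a solvable word problem. Then every finitely generated, recursively presented group $H$ which is residually $G$ has a solvable word problem.
   Context: A group $G$ is equationally Noetherian if for every finite tuple of variables $\mathbf{x}=(x_1,\dots,x_n)$ and every set $\Sigma\subseteq G\ast F(\mathbf{x})$ of equations over $G$, there is a finite subset $\Sigma_0\subseteq\Sigma$ such that the set of solutions $\{\mathbf{g}\in G^n : \sigma(\mathbf{g})=1\ \forall\sigma\in\Sigma\}$ equals $\{\mathbf{g}\in G^n : \sigma(\mathbf{g})=1\ \forall\sigma\in\Sigma_0\}$, where $\sigma(\mathbf{g})$ is obtained by substituting $g_i$ for $x_i$. A group $H$ is residually $G$ if for every $1\ne h\in H$ there is a homomorphism $f:H\to G$ with $f(h)\ne 1$. *)

theory Defs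
  imports "HOL-Algebra.Algebra" "HOL-Library.Nat_Bijection"
begin

datatype recf = Zr | Sc | Proj nat | Cn recf "recf list" | Pr recf recf | Mn recf

inductive reval :: "recf \<Rightarrow> nat list \<Rightarrow> nat \<Rightarrow> bool" where
  zero: "reval Zr xs 0"
| succ: "reval Sc (x # xs) (Suc x)"
| proj: "i < length xs \<Longrightarrow> reval (Proj i) xs (xs ! i)"
| comp: "list_all2 (\<lambda>g y. reval g xs y) gs ys \<Longrightarrow> reval f ys z \<Longrightarrow> reval (Cn f gs) xs z"
| pr0: "reval f xs y \<Longrightarrow> reval (Pr f g) (0 # xs) y"
| prS: "reval (Pr f g) (n # xs) y \<Longrightarrow> reval g (n # y # xs) z \<Longrightarrow> reval (Pr f g) (Suc n # xs) z"
| mn: "reval f (n # xs) 0 \<Longrightarrow> (\<forall>m<n. \<exists>y. reval f (m # xs) y \<and> y \<noteq> 0) \<Longrightarrow> reval (Mn f) xs n"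

definition computable_set :: "nat set \<Rightarrow> bool" where
  "computable_set A \<longleftrightarrow> (\<exists>f. \<forall>n. reval f [n] (if n \<in> A then 1 else 0))"

definition re_set :: "nat set \<Rightarrow> bool" where
  "re_set A \<longleftrightarrow> (\<exists>f. \<forall>n. n \<in> A \<longleftrightarrow> (\<exists>y. reval f [n] y))"

text \<open>A letter (i, False) stands for x_i, (i, True) for x_i^{-1}.\<close>
type_synonym word = "(nat \<times> bool) list"

definition letter_code :: "nat \<times> bool \<Rightarrow> nat" where
  "letter_code l = 2 * fst l + (if snd l then 1 else 0)"

definition word_code :: "word \<Rightarrow> nat" where
  "word_code w = list_encode (map letter_code w)"

definition words_over :: "nat \<Rightarrow> word set" where
  "words_over k = {w. \<forall>l \<in> set w. fst l < k}"

definition flip_letter :: "nat \<times> bool \<Rightarrow> nat \<times> bool" where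
  "flip_letter l = (fst l, \<not> snd l)"

definition word_inv :: "word \<Rightarrow> word" where
  "word_inv w = rev (map flip_letter w)"

inductive_set normal_closure_words :: "nat \<Rightarrow> word set \<Rightarrow> word set" for k R where
  rel: "w \<in> R \<Longrightarrow> w \<in> normal_closure_words k R"
| empty: "[] \<in> normal_closure_words k R"
| mult: "u \<in> normal_closure_words k R \<Longrightarrow> v \<in> normal_closure_words k R \<Longrightarrow> u @ v \<in> normal_closure_words k R"
| inv: "u \<in> normal_closure_words k R \<Longrightarrow> word_inv u \<in> normal_closure_words k R"
| conj: "u \<in> normal_closure_words k R \<Longrightarrow> fst x < k \<Longrightarrow> [x] @ u @ [flip_letter x] \<in> normal_closure_words k R"
| ins: "u @ v \<in> normal_closure_words k R \<Longrightarrow> fst x < k \<Longrightarrow> u @ [x, flip_letter x] @ v \<in> normal_closure_words k R"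
| del: "u @ [x, flip_letter x] @ v \<in> normal_closure_words k R \<Longrightarrow> u @ v \<in> normal_closure_words k R"

definition eval_word :: "('a, 'b) monoid_scheme \<Rightarrow> (nat \<Rightarrow> 'a) \<Rightarrow> word \<Rightarrow> 'a" where
  "eval_word G g w = foldr (\<lambda>l acc. (if snd l then inv\<^bsub>G\<^esub> (g (fst l)) else g (fst l)) \<otimes>\<^bsub>G\<^esub> acc) w \<one>\<^bsub>G\<^esub>"

definition finitely_generated_group :: "('a, 'b) monoid_scheme \<Rightarrow> bool" where
  "finitely_generated_group H \<longleftrightarrow>
     (\<exists>(k::nat) g. g ` {..<k} \<subseteq> carrier H \<and> generate H (g ` {..<k}) = carrier H)"

text \<open>For finitely generated groups this is the usual notion (take a finite family, repeated).\<close>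
definition solvable_word_problem :: "('a, 'b) monoid_scheme \<Rightarrow> bool" where
  "solvable_word_problem G \<longleftrightarrow>
     (\<exists>g. range g \<subseteq> carrier G \<and> generate G (range g) = carrier G \<and>
          computable_set (word_code ` {w. eval_word G g w = \<one>\<^bsub>G\<^esub>}))"

definition recursively_presented :: "('a, 'b) monoid_scheme \<Rightarrow> bool" where
  "recursively_presented H \<longleftrightarrow>
     (\<exists>k g R. g ` {..<k} \<subseteq> carrier H \<and> generate H (g ` {..<k}) = carrier H \<and>
        R \<subseteq> words_over k \<and> re_set (word_code ` R) \<and>
        (\<forall>w \<in> words_over k. eval_word H g w = \<one>\<^bsub>H\<^esub> \<longleftrightarrow> w \<in> normal_closure_words k R))"

definition residually :: "('a, 'b) monoid_scheme \<Rightarrow> ('c, 'd) monoid_scheme \<Rightarrow> bool" where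
  "residually G H \<longleftrightarrow>
     (\<forall>h \<in> carrier H. h \<noteq> \<one>\<^bsub>H\<^esub> \<longrightarrow> (\<exists>f \<in> hom H G. f h \<noteq> \<one>\<^bsub>G\<^esub>))"

text \<open>Equations over G in variables x_0..x_{n-1}: words in G * F(x), a letter being either a
  constant (Inl g) or a variable letter (Inr (i, b)), b = True meaning x_i^{-1}.\<close>
type_synonym 'a eqn = "('a + nat \<times> bool) list"

definition is_equation :: "('a, 'b) monoid_scheme \<Rightarrow> nat \<Rightarrow> 'a eqn \<Rightarrow> bool" where
  "is_equation G n e \<longleftrightarrow>
     (\<forall>l \<in> set e. case l of Inl c \<Rightarrow> c \<in> carrier G | Inr v \<Rightarrow> fst v < n)"

definition eval_eqn :: "('a, 'b) monoid_scheme \<Rightarrow> 'a list \<Rightarrow> 'a eqn \<Rightarrow> 'a" where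
  "eval_eqn G as e = foldr (\<lambda>l acc. (case l of Inl c \<Rightarrow> c
        | Inr v \<Rightarrow> (if snd v then inv\<^bsub>G\<^esub> (as ! fst v) else as ! fst v)) \<otimes>\<^bsub>G\<^esub> acc) e \<one>\<^bsub>G\<^esub>"

definition solution_set :: "('a, 'b) monoid_scheme \<Rightarrow> nat \<Rightarrow> 'a eqn set \<Rightarrow> 'a list set" where
  "solution_set G n S = {as. length as = n \<and> set as \<subseteq> carrier G \<and>
                             (\<forall>e \<in> S. eval_eqn G as e = \<one>\<^bsub>G\<^esub>)}"

definition equationally_noetherian :: "('a, 'b) monoid_scheme \<Rightarrow> bool" where
  "equationally_noetherian G \<longleftrightarrow>
     (\<forall>n S. (\<forall>e \<in> S. is_equation G n e) \<longrightarrow>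
        (\<exists>S0 \<subseteq> S. finite S0 \<and> solution_set G n S = solution_set G n S0))"

end

theory Submission
  imports Defs
begin

(*
  The words that are trivial in H
  form the normal closure of R; enumerating derivations in the normal closure shows that the word
  problem of H is r.e.

  For the complement, a word w is nontrivial in H iff some assignment of the generators in G
  satisfies all relators but not w: one direction is residual G-ness applied to w, the other
  holds because an assignment satisfying R induces a homomorphism H -> G. Since G is equationally
  Noetherian, R may be replaced by a finite subsystem R_0 with the same solutions in G, and the
  assignments may be taken to consist of words in the generators of G. So w is nontrivial iff some
  tuple of words of G satisfies the finitely many equations of R_0 but not w, which the solvable
  word problem of G lets us check. Hence the complement is r.e. too, and the word problem of H is
  decidable.

  Computability is modelled by mu-recursive functions; the technical core is the Kleene normal
  form: the graph of every mu-recursive function is the projection of a decidable relation.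
*)

section \<open>Computable functions and decidable predicates\<close>

definition computable :: "nat \<Rightarrow> (nat list \<Rightarrow> nat) \<Rightarrow> bool" where
  "computable n F \<longleftrightarrow> (\<exists>f. \<forall>xs. length xs = n \<longrightarrow> reval f xs (F xs))"

definition decidable :: "nat \<Rightarrow> (nat list \<Rightarrow> bool) \<Rightarrow> bool" where
  "decidable n P \<longleftrightarrow> computable n (\<lambda>xs. if P xs then 1 else 0)"

lemma computable_cong:
  "computable n F \<Longrightarrow> (\<And>xs. length xs = n \<Longrightarrow> F xs = G xs) \<Longrightarrow> computable n G"
  unfolding computable_def by metis

fun const_recf :: "nat \<Rightarrow> recf" where
  "const_recf 0 = Zr"
| "const_recf (Suc c) = Cn Sc [const_recf c]"

lemma reval_const_recf: "reval (const_recf c) xs c"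
  by (induction c) (auto intro: reval.intros)

lemma computable_const: "computable n (\<lambda>xs. c)"
  unfolding computable_def using reval_const_recf by blast

lemma computable_nth: "i < n \<Longrightarrow> computable n (\<lambda>xs. xs ! i)"
  unfolding computable_def by (metis reval.proj)

lemma computable_Suc: "computable n A \<Longrightarrow> computable n (\<lambda>xs. Suc (A xs))"
  unfolding computable_def by (metis list.rel_inject(2) list_all2_Nil reval.comp reval.succ)

lemma computable_comp_map:
  assumes "computable m H" "\<And>j. j < m \<Longrightarrow> computable n (Gs j)"
  shows "computable n (\<lambda>xs. H (map (\<lambda>j. Gs j xs) [0..<m]))"
proof -
  obtain h where h: "\<forall>xs. length xs = m \<longrightarrow> reval h xs (H xs)"
    using assms(1) computable_def by blast
  obtain gs where gs: "\<And>j. j < m \<Longrightarrow> \<forall>xs. length xs = n \<longrightarrow> reval (gs j) xs (Gs j xs)"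
    using assms(2) unfolding computable_def by metis
  have "reval (Cn h (map gs [0..<m])) xs (H (map (\<lambda>j. Gs j xs) [0..<m]))" if "length xs = n" for xs
    by (rule reval.comp[where ys = "map (\<lambda>j. Gs j xs) [0..<m]"])
      (use gs h that in \<open>auto simp: list_all2_conv_all_nth\<close>)
  then show ?thesis unfolding computable_def by blast
qed

lemma computable_comp:
  assumes "computable m H" "\<And>j. j < m \<Longrightarrow> computable n (Gs j)"
    and "\<And>xs. length xs = n \<Longrightarrow> map (\<lambda>j. Gs j xs) [0..<m] = L xs"
  shows "computable n (\<lambda>xs. H (L xs))"
  using computable_comp_map[of m H n Gs] assms by (auto intro: computable_cong)

lemma computable_comp1: "computable 1 H \<Longrightarrow> computable n A \<Longrightarrow> computable n (\<lambda>xs. H [A xs])"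
  using computable_comp_map[of 1 H n "\<lambda>_. A"] by simp

lemma computable_comp2:
  "computable 2 H \<Longrightarrow> computable n A \<Longrightarrow> computable n B \<Longrightarrow> computable n (\<lambda>xs. H [A xs, B xs])"
  using computable_comp_map[of 2 H n "\<lambda>j. if j = 0 then A else B"] by (simp add: upt_rec)

lemma computable_comp3:
  "computable 3 H \<Longrightarrow> computable n A \<Longrightarrow> computable n B \<Longrightarrow> computable n C \<Longrightarrow>
    computable n (\<lambda>xs. H [A xs, B xs, C xs])"
  using computable_comp_map[of 3 H n "\<lambda>j. if j = 0 then A else if j = 1 then B else C"]
  by (simp add: upt_rec)

lemma computable_Cons_arg:
  "computable (Suc n) R \<Longrightarrow> computable n B \<Longrightarrow> computable n (\<lambda>xs. R (B xs # xs))"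
proof (rule computable_comp[where Gs = "\<lambda>j xs. if j = 0 then B xs else xs ! (j - 1)"])
  show "computable n (\<lambda>xs. if j = 0 then B xs else xs ! (j - 1))" if "computable n B" "j < Suc n" for j
    using that by (cases "j = 0") (auto intro: computable_nth)
qed (auto intro: nth_equalityI simp del: upt_Suc simp: nth_Cons split: nat.split)

lemma computable_drop: "computable n A \<Longrightarrow> computable (k + n) (\<lambda>ys. A (drop k ys))"
  by (rule computable_comp[where Gs = "\<lambda>j ys. ys ! (k + j)"])
    (auto intro: computable_nth nth_equalityI)

lemma computable_skip_second_arg:
  "computable (Suc n) F \<Longrightarrow> computable (Suc (Suc n)) (\<lambda>zs. F (zs ! 0 # drop 2 zs))"
  by (rule computable_comp[where Gs = "\<lambda>j zs. zs ! (if j = 0 then 0 else j + 1)"])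
    (auto intro: computable_nth nth_equalityI simp del: upt_Suc simp: nth_Cons split: nat.split)

lemma computable_drop_nth: "k + j < n \<Longrightarrow> computable n (\<lambda>xs. drop k xs ! j)"
  by (rule computable_cong[OF computable_nth[of "k + j" n]]) auto

lemma computable_apply1:
  "computable 1 (\<lambda>xs. h (xs ! 0)) \<Longrightarrow> computable n A \<Longrightarrow> computable n (\<lambda>xs. h (A xs))"
  using computable_comp1[of "\<lambda>xs. h (xs ! 0)" n A] by simp

lemma computable_apply2:
  "computable 2 (\<lambda>xs. h (xs ! 0) (xs ! 1)) \<Longrightarrow> computable n A \<Longrightarrow> computable n B \<Longrightarrow>
    computable n (\<lambda>xs. h (A xs) (B xs))"
  using computable_comp2[of "\<lambda>xs. h (xs ! 0) (xs ! 1)" n A B] by simp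

text \<open>The semantics of \<^const>\<open>Pr\<close>: the step function receives the counter and the previous
  value in front of the parameters.\<close>
fun prim_rec :: "(nat list \<Rightarrow> nat) \<Rightarrow> (nat list \<Rightarrow> nat) \<Rightarrow> nat \<Rightarrow> nat list \<Rightarrow> nat" where
  "prim_rec F S 0 ys = F ys"
| "prim_rec F S (Suc m) ys = S (m # prim_rec F S m ys # ys)"

lemma computable_prim_rec_hd_tl:
  assumes "computable n F" "computable (Suc (Suc n)) S"
  shows "computable (Suc n) (\<lambda>xs. prim_rec F S (hd xs) (tl xs))"
proof -
  obtain f where f: "\<forall>xs. length xs = n \<longrightarrow> reval f xs (F xs)"
    using assms(1) computable_def by blast
  obtain s where s: "\<forall>xs. length xs = Suc (Suc n) \<longrightarrow> reval s xs (S xs)"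
    using assms(2) computable_def by blast
  have Pr: "reval (Pr f s) (m # ys) (prim_rec F S m ys)" if "length ys = n" for m ys
    using that by (induction m) (simp_all add: f s reval.pr0 reval.prS)
  show ?thesis unfolding computable_def
  proof (intro exI allI impI)
    fix xs :: "nat list" assume "length xs = Suc n"
    then show "reval (Pr f s) xs (prim_rec F S (hd xs) (tl xs))"
      using Pr by (cases xs) auto
  qed
qed

lemma computable_prim_rec:
  "computable n F \<Longrightarrow> computable (Suc (Suc n)) S \<Longrightarrow> computable n M \<Longrightarrow>
    computable n (\<lambda>xs. prim_rec F S (M xs) xs)"
  using computable_Cons_arg[OF computable_prim_rec_hd_tl] by simp

lemma computable_minimize:
  assumes "computable (Suc n) P" and "\<And>xs. length xs = n \<Longrightarrow> \<exists>m. P (m # xs) = 0"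
  shows "computable n (\<lambda>xs. LEAST m. P (m # xs) = 0)"
proof -
  obtain p where p: "\<forall>xs. length xs = Suc n \<longrightarrow> reval p xs (P xs)"
    using assms(1) computable_def by blast
  have "reval (Mn p) xs (LEAST m. P (m # xs) = 0)" if "length xs = n" for xs
  proof (rule reval.mn)
    have "P ((LEAST m. P (m # xs) = 0) # xs) = 0"
      using assms(2)[OF that] by (rule LeastI_ex)
    then show "reval p ((LEAST m. P (m # xs) = 0) # xs) 0"
      using p that by (metis length_Cons)
    show "\<forall>m<(LEAST m. P (m # xs) = 0). \<exists>y. reval p (m # xs) y \<and> y \<noteq> 0"
    proof (intro allI impI)
      fix m assume "m < (LEAST m. P (m # xs) = 0)"
      then have "P (m # xs) \<noteq> 0" by (rule not_less_Least)
      then show "\<exists>y. reval p (m # xs) y \<and> y \<noteq> 0" using p that by (metis length_Cons)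
    qed
  qed
  then show ?thesis unfolding computable_def by blast
qed

lemma computable_add: "computable n A \<Longrightarrow> computable n B \<Longrightarrow> computable n (\<lambda>xs. A xs + B xs)"
proof -
  assume "computable n A" "computable n B"
  moreover have "prim_rec B (\<lambda>zs. Suc (zs ! 1)) m xs = m + B xs" for m xs
    by (induction m) auto
  ultimately show ?thesis
    using computable_prim_rec[of n B "\<lambda>zs. Suc (zs ! 1)" A]
    by (simp add: computable_Suc computable_nth)
qed

lemma computable_mult: "computable n A \<Longrightarrow> computable n B \<Longrightarrow> computable n (\<lambda>xs. A xs * B xs)"
proof -
  assume A: "computable n A" and B: "computable n B"
  have eq: "prim_rec (\<lambda>_. 0) (\<lambda>zs. zs ! 1 + B (drop 2 zs)) m xs = m * B xs" for m xs
    by (induction m) auto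
  have "computable (Suc (Suc n)) (\<lambda>zs. zs ! 1 + B (drop 2 zs))"
    using computable_add[OF computable_nth computable_drop[OF B, of 2]] by simp
  from computable_prim_rec[where F = "\<lambda>_. 0", OF computable_const this A] show ?thesis
    by (simp only: eq)
qed

lemma computable_pred: "computable n A \<Longrightarrow> computable n (\<lambda>xs. A xs - 1)"
proof -
  assume "computable n A"
  moreover have "prim_rec (\<lambda>_. 0) (\<lambda>zs. zs ! 0) m xs = m - 1" for m xs
    by (induction m) auto
  ultimately show ?thesis
    using computable_prim_rec[where F = "\<lambda>_. 0" and S = "\<lambda>zs. zs ! 0"]
    by (simp add: computable_const computable_nth)
qed

lemma computable_diff: "computable n A \<Longrightarrow> computable n B \<Longrightarrow> computable n (\<lambda>xs. A xs - B xs)"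
proof -
  assume "computable n A" "computable n B"
  moreover have "prim_rec A (\<lambda>zs. zs ! 1 - 1) m xs = A xs - m" for m xs
    by (induction m) auto
  moreover have "computable (Suc (Suc n)) (\<lambda>zs. zs ! 1 - 1)"
    by (intro computable_pred computable_nth) simp
  ultimately show ?thesis
    using computable_prim_rec[of n A "\<lambda>zs. zs ! 1 - 1" B] by simp
qed

lemma computable_If:
  assumes P: "decidable n P" and A: "computable n A" and B: "computable n B"
  shows "computable n (\<lambda>xs. if P xs then A xs else B xs)"
proof -
  have P': "computable n (\<lambda>xs. if P xs then 1 else 0)" using P decidable_def by blast
  show ?thesis
    by (rule computable_cong[OF computable_add[OF computable_mult[OF A P']
          computable_mult[OF B computable_diff[OF computable_const[where c = 1] P']]]]) auto
qed

lemma decidable_const: "decidable n (\<lambda>xs. b)"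
  unfolding decidable_def by (rule computable_const)

lemma decidable_eq:
  assumes A: "computable n A" and B: "computable n B"
  shows "decidable n (\<lambda>xs. A xs = B xs)"
  unfolding decidable_def
  by (rule computable_cong[OF computable_diff[OF computable_const[where c = 1]
        computable_add[OF computable_diff[OF A B] computable_diff[OF B A]]]]) auto

lemma decidable_less:
  assumes A: "computable n A" and B: "computable n B"
  shows "decidable n (\<lambda>xs. A xs < B xs)"
  unfolding decidable_def
  by (rule computable_cong[OF computable_diff[OF computable_const[where c = 1]
        computable_diff[OF computable_const[where c = 1] computable_diff[OF B A]]]]) auto

lemma decidable_not: "decidable n P \<Longrightarrow> decidable n (\<lambda>xs. \<not> P xs)"
  unfolding decidable_def
  by (erule computable_cong[OF computable_diff[OF computable_const[where c = 1]]]) auto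

lemma decidable_conj:
  assumes "decidable n P" and "decidable n Q"
  shows "decidable n (\<lambda>xs. P xs \<and> Q xs)"
  using assms unfolding decidable_def by (rule computable_cong[OF computable_mult]) auto

lemma decidable_disj: "decidable n P \<Longrightarrow> decidable n Q \<Longrightarrow> decidable n (\<lambda>xs. P xs \<or> Q xs)"
  using decidable_not[OF decidable_conj[OF decidable_not decidable_not], of n P Q] by simp

lemma decidable_comp1: "decidable 1 T \<Longrightarrow> computable n A \<Longrightarrow> decidable n (\<lambda>xs. T [A xs])"
  unfolding decidable_def using computable_comp1[where H = "\<lambda>v. if T v then 1 else 0"] by simp

lemma decidable_comp2:
  "decidable 2 T \<Longrightarrow> computable n A \<Longrightarrow> computable n B \<Longrightarrow> decidable n (\<lambda>xs. T [A xs, B xs])"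
  unfolding decidable_def by (rule computable_comp2[where H = "\<lambda>v. if T v then 1 else 0", simplified])

lemma decidable_comp3:
  "decidable 3 T \<Longrightarrow> computable n A \<Longrightarrow> computable n B \<Longrightarrow> computable n C \<Longrightarrow>
    decidable n (\<lambda>xs. T [A xs, B xs, C xs])"
  unfolding decidable_def by (rule computable_comp3[where H = "\<lambda>v. if T v then 1 else 0", simplified])

lemma decidable_bounded_all:
  assumes P: "decidable (Suc n) (\<lambda>ys. P (ys ! 0) (drop 1 ys))" and B: "computable n B"
  shows "decidable n (\<lambda>xs. \<forall>i<B xs. P i xs)"
proof -
  have "computable (Suc (Suc n)) (\<lambda>zs. if P (zs ! 0) (drop 2 zs) then 1 else 0)"
    using computable_skip_second_arg[OF P[unfolded decidable_def]] by simp
  then have "computable (Suc (Suc n)) (\<lambda>zs. zs ! 1 * (if P (zs ! 0) (drop 2 zs) then 1 else 0))"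
    by (intro computable_mult computable_nth) simp_all
  from computable_prim_rec[where F = "\<lambda>_. 1", OF computable_const this B]
  moreover have "prim_rec (\<lambda>_. 1) (\<lambda>zs. zs ! 1 * (if P (zs ! 0) (drop 2 zs) then 1 else 0)) m xs
      = (if \<forall>i<m. P i xs then 1 else 0)" for m xs
    by (induction m) (auto simp: less_Suc_eq)
  ultimately show ?thesis unfolding decidable_def by simp
qed

lemma decidable_bounded_ex:
  "decidable (Suc n) (\<lambda>ys. P (ys ! 0) (drop 1 ys)) \<Longrightarrow> computable n B \<Longrightarrow>
    decidable n (\<lambda>xs. \<exists>i<B xs. P i xs)"
  using decidable_not[OF decidable_bounded_all[OF decidable_not]] by simp

lemma computable_Least:
  assumes P: "decidable (Suc n) (\<lambda>ys. P (ys ! 0) (drop 1 ys))"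
    and ex: "\<And>xs. length xs = n \<Longrightarrow> \<exists>m. P m xs"
  shows "computable n (\<lambda>xs. LEAST m. P m xs)"
proof -
  have "computable (Suc n) (\<lambda>ys. if P (ys ! 0) (drop 1 ys) then 0 else 1)"
    using computable_If[OF P computable_const computable_const] .
  then have "computable n (\<lambda>xs. LEAST m. (if P ((m # xs) ! 0) (drop 1 (m # xs)) then 0 else 1) = (0::nat))"
    by (rule computable_minimize) (use ex in auto)
  moreover have "((if Q then 0 else 1) = (0::nat)) \<longleftrightarrow> Q" for Q
    by simp
  ultimately show ?thesis by simp
qed

lemma decidable_all_below:
  "(\<And>j. j < m \<Longrightarrow> decidable n (P j)) \<Longrightarrow> decidable n (\<lambda>xs. \<forall>j<(m::nat). P j xs)"
proof (induction m)
  case 0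
  show ?case by (simp add: decidable_const)
next
  case (Suc m)
  then have "decidable n (\<lambda>xs. (\<forall>j<m. P j xs) \<and> P m xs)"
    by (intro decidable_conj) auto
  moreover have "(\<forall>j<Suc m. P j xs) \<longleftrightarrow> (\<forall>j<m. P j xs) \<and> P m xs" for xs
    by (auto simp: less_Suc_eq)
  ultimately show ?case by simp
qed

lemma decidable_list_all:
  "(\<And>r. r \<in> set rs \<Longrightarrow> decidable n (P r)) \<Longrightarrow> decidable n (\<lambda>xs. \<forall>r\<in>set rs. P r xs)"
  by (induction rs) (auto intro: decidable_conj decidable_const)

lemma computable_div:
  assumes d: "0 < d" and A: "computable n A"
  shows "computable n (\<lambda>xs. A xs div d)"
proof -
  have "A xs < d * Suc q \<longleftrightarrow> A xs div d \<le> q" for xs q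
    using d by (metis div_less_iff_less_mult less_Suc_eq_le mult.commute)
  then have "(LEAST q. A xs < d * Suc q) = A xs div d" for xs
    by (auto intro: Least_equality)
  moreover have "computable n (\<lambda>xs. LEAST q. A xs < d * Suc q)"
  proof (rule computable_Least)
    show "decidable (Suc n) (\<lambda>ys. A (drop 1 ys) < d * Suc (ys ! 0))"
      using computable_drop[OF A, of 1]
      by (intro decidable_less computable_mult computable_const computable_Suc computable_nth) simp_all
    show "\<exists>q. A xs < d * Suc q" for xs
      using d by (metis div_less_iff_less_mult lessI mult.commute)
  qed
  ultimately show ?thesis by simp
qed

lemma computable_mod: "0 < d \<Longrightarrow> computable n A \<Longrightarrow> computable n (\<lambda>xs. A xs mod d)"
  by (rule computable_cong[OF computable_diff[OF _ computable_mult[OF computable_const[where c = d] computable_div]]])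
    (auto simp: minus_mult_div_eq_mod)

lemma computable_triangle: "computable n A \<Longrightarrow> computable n (\<lambda>xs. triangle (A xs))"
proof -
  assume "computable n A"
  moreover have "prim_rec (\<lambda>_. 0) (\<lambda>zs. zs ! 1 + Suc (zs ! 0)) m xs = triangle m" for m xs
    by (induction m) auto
  moreover have "computable (Suc (Suc n)) (\<lambda>zs. zs ! 1 + Suc (zs ! 0))"
    by (intro computable_add computable_Suc computable_nth) simp_all
  ultimately show ?thesis
    using computable_prim_rec[where F = "\<lambda>_. 0" and S = "\<lambda>zs. zs ! 1 + Suc (zs ! 0)"]
    by (simp add: computable_const)
qed

lemma computable_prod_encode:
  "computable n A \<Longrightarrow> computable n B \<Longrightarrow> computable n (\<lambda>xs. prod_encode (A xs, B xs))"
  unfolding prod_encode_def by (simp add: computable_add computable_triangle)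

lemmas computable_intros = computable_const decidable_const computable_nth computable_drop_nth
  computable_Suc computable_add computable_mult computable_diff
  computable_If decidable_eq decidable_less decidable_not decidable_conj
  decidable_disj computable_triangle computable_prod_encode

lemma fst_prod_decode_eq_Least: "fst (prod_decode c) = (LEAST a. \<exists>b<Suc c. prod_encode (a, b) = c)"
  by (rule Least_equality[symmetric])
    (auto, metis le_imp_less_Suc le_prod_encode_2 prod.collapse prod_decode_inverse)

lemma snd_prod_decode_eq_Least: "snd (prod_decode c) = (LEAST b. \<exists>a<Suc c. prod_encode (a, b) = c)"
  by (rule Least_equality[symmetric])
    (auto, metis le_imp_less_Suc le_prod_encode_1 prod.collapse prod_decode_inverse)

lemma computable_fst_prod_decode:
  assumes "computable n A"
  shows "computable n (\<lambda>xs. fst (prod_decode (A xs)))"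
proof -
  have "computable 1 (\<lambda>xs. fst (prod_decode (xs ! 0)))"
    unfolding fst_prod_decode_eq_Least
    by (rule computable_Least) ((intro computable_intros decidable_bounded_ex | simp)+,
        metis le_imp_less_Suc le_prod_encode_2 prod_decode_inverse prod.collapse)
  from computable_apply1[where h = "\<lambda>c. fst (prod_decode c)", OF this assms] show ?thesis .
qed

lemma computable_snd_prod_decode:
  assumes "computable n A"
  shows "computable n (\<lambda>xs. snd (prod_decode (A xs)))"
proof -
  have "computable 1 (\<lambda>xs. snd (prod_decode (xs ! 0)))"
    unfolding snd_prod_decode_eq_Least
    by (rule computable_Least) ((intro computable_intros decidable_bounded_ex | simp)+,
        metis le_imp_less_Suc le_prod_encode_1 prod_decode_inverse prod.collapse)
  from computable_apply1[where h = "\<lambda>c. snd (prod_decode c)", OF this assms] show ?thesis .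
qed

section \<open>Codes of finite sequences\<close>

definition seq_hd :: "nat \<Rightarrow> nat" where
  "seq_hd c = fst (prod_decode (c - 1))"

definition seq_tl :: "nat \<Rightarrow> nat" where
  "seq_tl c = snd (prod_decode (c - 1))"

definition seq_cons :: "nat \<Rightarrow> nat \<Rightarrow> nat" where
  "seq_cons x c = Suc (prod_encode (x, c))"

definition seq_drop :: "nat \<Rightarrow> nat \<Rightarrow> nat" where
  "seq_drop i c = (seq_tl ^^ i) c"

definition seq_nth :: "nat \<Rightarrow> nat \<Rightarrow> nat" where
  "seq_nth c i = seq_hd (seq_drop i c)"

definition seq_length :: "nat \<Rightarrow> nat" where
  "seq_length c = length (list_decode c)"

definition seq_append :: "nat \<Rightarrow> nat \<Rightarrow> nat" where
  "seq_append c d = foldr seq_cons (list_decode c) d"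

lemma seq_hd_cons [simp]: "seq_hd (Suc (prod_encode (x, c))) = x"
  by (simp add: seq_hd_def)

lemma seq_tl_cons [simp]: "seq_tl (Suc (prod_encode (x, c))) = c"
  by (simp add: seq_tl_def)

lemma seq_hd_list_encode_Cons [simp]: "seq_hd (list_encode (x # xs)) = x"
  by (simp add: seq_hd_def)

lemma seq_tl_list_encode_Cons [simp]: "seq_tl (list_encode (x # xs)) = list_encode xs"
  by (simp add: seq_tl_def)

lemma seq_cons_list_encode [simp]: "seq_cons x (list_encode xs) = list_encode (x # xs)"
  by (simp add: seq_cons_def)

lemma list_decode_nonzero: "c \<noteq> 0 \<Longrightarrow> list_decode c = seq_hd c # list_decode (seq_tl c)"
  by (cases c) (auto simp: seq_hd_def seq_tl_def split: prod.split)

lemma seq_tl_eq: "seq_tl c = list_encode (tl (list_decode c))"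
proof (cases "c = 0")
  case True
  then show ?thesis by (simp add: seq_tl_def prod_decode_def prod_decode_aux.simps)
next
  case False
  then show ?thesis by (subst list_decode_nonzero) auto
qed

lemma seq_drop_eq: "seq_drop i c = list_encode (drop i (list_decode c))"
  by (induction i) (auto simp: seq_drop_def seq_tl_eq drop_Suc tl_drop)

lemma seq_hd_eq: "list_decode c \<noteq> [] \<Longrightarrow> seq_hd c = hd (list_decode c)"
  by (metis list_decode_nonzero list.sel(1) list_decode.simps(1))

lemma seq_nth_eq: "i < length (list_decode c) \<Longrightarrow> seq_nth c i = list_decode c ! i"
  by (simp add: seq_nth_def seq_drop_eq seq_hd_eq hd_drop_conv_nth)

lemma seq_nth_list_encode [simp]: "i < length xs \<Longrightarrow> seq_nth (list_encode xs) i = xs ! i"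
  by (simp add: seq_nth_eq)

lemma seq_length_list_encode [simp]: "seq_length (list_encode xs) = length xs"
  by (simp add: seq_length_def)

lemma seq_append_list_encode [simp]:
  "seq_append (list_encode xs) (list_encode ys) = list_encode (xs @ ys)"
  unfolding seq_append_def by (induction xs) auto

lemma computable_seq_hd: "computable n A \<Longrightarrow> computable n (\<lambda>xs. seq_hd (A xs))"
  unfolding seq_hd_def by (intro computable_fst_prod_decode computable_diff computable_const)

lemma computable_seq_tl: "computable n A \<Longrightarrow> computable n (\<lambda>xs. seq_tl (A xs))"
  unfolding seq_tl_def by (intro computable_snd_prod_decode computable_diff computable_const)

lemma computable_seq_cons:
  "computable n A \<Longrightarrow> computable n B \<Longrightarrow> computable n (\<lambda>xs. seq_cons (A xs) (B xs))"
  unfolding seq_cons_def by (intro computable_Suc computable_prod_encode)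

lemma computable_seq_drop:
  assumes I: "computable n I" and C: "computable n C"
  shows "computable n (\<lambda>xs. seq_drop (I xs) (C xs))"
proof -
  have "prim_rec C (\<lambda>zs. seq_tl (zs ! 1)) i xs = seq_drop i (C xs)" for i xs
    by (induction i) (auto simp: seq_drop_def)
  moreover have "computable (Suc (Suc n)) (\<lambda>zs. seq_tl (zs ! 1))"
    by (intro computable_seq_tl computable_nth) simp
  ultimately show ?thesis
    using computable_prim_rec[OF C _ I, of "\<lambda>zs. seq_tl (zs ! 1)"] by simp
qed

lemma computable_seq_nth:
  "computable n A \<Longrightarrow> computable n B \<Longrightarrow> computable n (\<lambda>xs. seq_nth (A xs) (B xs))"
  unfolding seq_nth_def by (intro computable_seq_hd computable_seq_drop)

lemma seq_length_eq_Least: "seq_length c = (LEAST i. seq_drop i c = 0)"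
proof -
  have "seq_drop i c = 0 \<longleftrightarrow> length (list_decode c) \<le> i" for i
    by (metis seq_drop_eq drop_eq_Nil list_encode.simps(1) list_encode_eq)
  then show ?thesis unfolding seq_length_def by (auto intro!: Least_equality[symmetric])
qed

lemma computable_seq_length:
  assumes "computable n A"
  shows "computable n (\<lambda>xs. seq_length (A xs))"
proof -
  have "computable 1 (\<lambda>xs. seq_length (xs ! 0))"
    unfolding seq_length_eq_Least
    by (rule computable_Least) ((intro computable_intros computable_seq_drop | simp)+,
        metis seq_drop_eq drop_all list_encode.simps(1) order_refl)
  from computable_apply1[where h = seq_length, OF this assms] show ?thesis .
qed

lemma computable_update_hd:
  assumes F: "computable (Suc n) F" and A: "computable (Suc n) A"
  shows "computable (Suc n) (\<lambda>zs. F (A zs # tl zs))"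
proof (rule computable_comp[OF F, where Gs = "\<lambda>j zs. if j = 0 then A zs else zs ! j"])
  show "computable (Suc n) (\<lambda>zs. if j = 0 then A zs else zs ! j)" if "j < Suc n" for j
    using that A by (cases "j = 0") (auto intro: computable_nth)
  show "map (\<lambda>j. if j = 0 then A zs else zs ! j) [0..<Suc n] = A zs # tl zs"
    if "length zs = Suc n" for zs
    using that by (intro nth_equalityI) (auto simp del: upt_Suc simp: nth_Cons nth_tl split: nat.split)
qed

text \<open>The fold runs through the sequence backwards, the \<open>j\<close>-th step consuming the
  \<open>j\<close>-th element from the end.\<close>
lemma prim_rec_foldr:
  fixes C :: "nat list \<Rightarrow> nat" and xs :: "nat list"
  defines "L \<equiv> list_decode (C xs)"
  assumes "j \<le> length L"
  shows "prim_rec I (\<lambda>zs. S (seq_nth (C (drop 2 zs)) (seq_length (C (drop 2 zs)) - Suc (zs ! 0)))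
      (zs ! 1) (drop 2 zs)) j xs = foldr (\<lambda>x acc. S x acc xs) (drop (length L - j) L) (I xs)"
  using assms(2)
proof (induction j)
  case (Suc j)
  have "length L - Suc j < length L" using Suc.prems by simp
  then have "drop (length L - Suc j) L = L ! (length L - Suc j) # drop (length L - j) L"
    by (metis Cons_nth_drop_Suc Suc.prems Suc_diff_Suc Suc_le_lessD)
  with Suc show ?case by (simp add: seq_nth_eq seq_length_def L_def)
qed (simp add: L_def)

lemma computable_foldr:
  assumes S: "computable (Suc (Suc n)) (\<lambda>ys. S (ys ! 0) (ys ! 1) (drop 2 ys))"
    and C: "computable n C" and I: "computable n I"
  shows "computable n (\<lambda>xs. foldr (\<lambda>x acc. S x acc xs) (list_decode (C xs)) (I xs))"
proof -
  let ?A = "\<lambda>zs. seq_nth (C (drop 2 zs)) (seq_length (C (drop 2 zs)) - Suc (zs ! 0))"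
  have "computable (Suc (Suc n)) (\<lambda>zs. C (drop 2 zs))"
    using computable_drop[OF C, of 2] by simp
  then have "computable (Suc (Suc n)) ?A"
    by (intro computable_seq_nth computable_seq_length computable_diff computable_Suc computable_nth) simp_all
  from computable_update_hd[OF S this]
  have "computable (Suc (Suc n)) (\<lambda>zs. S (?A zs) (zs ! 1) (drop 2 zs))"
    by (rule computable_cong) (auto simp: nth_tl drop_Suc numeral_2_eq_2)
  from computable_prim_rec[OF I this computable_seq_length[OF C]] show ?thesis
  proof (rule computable_cong)
    fix xs :: "nat list"
    show "prim_rec I (\<lambda>zs. S (?A zs) (zs ! 1) (drop 2 zs)) (seq_length (C xs)) xs
        = foldr (\<lambda>x acc. S x acc xs) (list_decode (C xs)) (I xs)"
      using prim_rec_foldr[where C = C and xs = xs and j = "seq_length (C xs)"]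
      by (simp add: seq_length_def)
  qed
qed

lemma computable_seq_append:
  assumes "computable n A" "computable n B"
  shows "computable n (\<lambda>xs. seq_append (A xs) (B xs))"
proof -
  have "computable 2 (\<lambda>xs. foldr (\<lambda>x acc. seq_cons x acc) (list_decode (xs ! 0)) (xs ! 1))"
    by (rule computable_foldr[where S = "\<lambda>x acc xs. seq_cons x acc"])
      (intro computable_seq_cons computable_nth | simp)+
  from computable_apply2[where h = seq_append, OF this[folded seq_append_def] assms] show ?thesis .
qed

section \<open>Codes of words\<close>

definition letter_decode :: "nat \<Rightarrow> nat \<times> bool" where
  "letter_decode c = (c div 2, odd c)"

definition word_decode :: "nat \<Rightarrow> word" where
  "word_decode n = map letter_decode (list_decode n)"

lemma letter_code_decode [simp]: "letter_code (letter_decode c) = c"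
  by (simp add: letter_code_def letter_decode_def)

lemma letter_decode_code [simp]: "letter_decode (letter_code l) = l"
  by (cases l) (auto simp: letter_code_def letter_decode_def)

lemma letter_code_less_iff: "letter_code l < 2 * k \<longleftrightarrow> fst l < k"
  by (cases l) (auto simp: letter_code_def)

lemma letter_decode_less: "x < 2 * k \<Longrightarrow> fst (letter_decode x) < k"
  by (metis letter_code_decode letter_code_less_iff)

lemma word_code_decode [simp]: "word_code (word_decode n) = n"
  by (simp add: word_code_def word_decode_def comp_def)

lemma word_decode_code [simp]: "word_decode (word_code w) = w"
  by (simp add: word_code_def word_decode_def comp_def)

lemma word_code_image_iff: "n \<in> word_code ` S \<longleftrightarrow> word_decode n \<in> S"
  by (metis image_iff word_code_decode word_decode_code)

lemma word_code_Nil [simp]: "word_code [] = 0"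
  by (simp add: word_code_def)

lemma word_decode_0 [simp]: "word_decode 0 = []"
  by (simp add: word_decode_def)

lemma seq_append_word_code [simp]: "seq_append (word_code u) (word_code v) = word_code (u @ v)"
  by (simp add: word_code_def)

lemma seq_cons_word_code [simp]: "seq_cons (letter_code l) (word_code v) = word_code (l # v)"
  by (simp add: word_code_def)

lemma word_decode_seq_append: "word_decode (seq_append u v) = word_decode u @ word_decode v"
  by (metis seq_append_word_code word_code_decode word_decode_code)

lemma word_decode_seq_cons: "word_decode (seq_cons x u) = letter_decode x # word_decode u"
  by (metis seq_cons_word_code letter_code_decode word_code_decode word_decode_code)

definition flip_code :: "nat \<Rightarrow> nat" where
  "flip_code x = (if x mod 2 = 0 then x + 1 else x - 1)"

lemma flip_code_letter_code: "flip_code (letter_code l) = letter_code (flip_letter l)"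
  by (cases l) (auto simp: flip_code_def letter_code_def flip_letter_def)

lemma flip_code_eq: "flip_code x = letter_code (flip_letter (letter_decode x))"
  by (metis flip_code_letter_code letter_code_decode)

lemma computable_flip_code: "computable n A \<Longrightarrow> computable n (\<lambda>xs. flip_code (A xs))"
  unfolding flip_code_def
  by (intro computable_If decidable_eq computable_mod computable_add computable_diff computable_const)
    simp_all

definition inv_code :: "nat \<Rightarrow> nat" where
  "inv_code u = foldr (\<lambda>x acc. seq_append acc (seq_cons (flip_code x) 0)) (list_decode u) 0"

lemma inv_code_word_code [simp]: "inv_code (word_code w) = word_code (word_inv w)"
proof (induction w)
  case Nil
  then show ?case by (simp add: inv_code_def word_code_def word_inv_def)
next
  case (Cons l w)
  have "inv_code (word_code (l # w)) =
      seq_append (inv_code (word_code w)) (seq_cons (flip_code (letter_code l)) (word_code []))"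
    by (simp add: inv_code_def word_code_def)
  also have "\<dots> = word_code (word_inv w @ [flip_letter l])"
    by (simp only: Cons flip_code_letter_code seq_cons_word_code seq_append_word_code)
  finally show ?case by (simp add: word_inv_def)
qed

lemma word_decode_inv_code: "word_decode (inv_code u) = word_inv (word_decode u)"
  by (metis inv_code_word_code word_code_decode word_decode_code)

lemma computable_inv_code:
  assumes "computable n A"
  shows "computable n (\<lambda>xs. inv_code (A xs))"
proof -
  have "computable 1 (\<lambda>xs. foldr (\<lambda>x acc. seq_append acc (seq_cons (flip_code x) 0))
      (list_decode (xs ! 0)) 0)"
    by (rule computable_foldr[where S = "\<lambda>x acc xs. seq_append acc (seq_cons (flip_code x) 0)"])
      (intro computable_seq_append computable_seq_cons computable_flip_code computable_nth
        computable_const | simp)+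
  from computable_apply1[where h = inv_code, OF this[folded inv_code_def] assms] show ?thesis .
qed

definition restrict_code :: "nat \<Rightarrow> nat \<Rightarrow> nat" where
  "restrict_code k u = foldr (\<lambda>x acc. if x < 2 * k then seq_cons x acc else acc) (list_decode u) 0"

lemma restrict_code_word_code:
  "restrict_code k (word_code w) = word_code (filter (\<lambda>l. fst l < k) w)"
  by (induction w) (auto simp: restrict_code_def word_code_def letter_code_less_iff)

lemma word_decode_restrict_code:
  "word_decode (restrict_code k n) = filter (\<lambda>l. fst l < k) (word_decode n)"
  by (metis restrict_code_word_code word_code_decode word_decode_code)

lemma computable_restrict_code:
  assumes "computable n A"
  shows "computable n (\<lambda>xs. restrict_code k (A xs))"
proof -
  have "computable 1 (\<lambda>xs. foldr (\<lambda>x acc. if x < 2 * k then seq_cons x acc else acc)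
      (list_decode (xs ! 0)) 0)"
    by (rule computable_foldr[where S = "\<lambda>x acc xs. if x < 2 * k then seq_cons x acc else acc"])
      (intro computable_intros computable_seq_cons | simp)+
  from computable_apply1[where h = "restrict_code k", OF this[folded restrict_code_def] assms]
  show ?thesis .
qed

definition word_subst :: "(nat \<Rightarrow> word) \<Rightarrow> word \<Rightarrow> word" where
  "word_subst \<sigma> w = concat (map (\<lambda>l. if snd l then word_inv (\<sigma> (fst l)) else \<sigma> (fst l)) w)"

definition subst_code :: "nat \<Rightarrow> nat \<Rightarrow> nat" where
  "subst_code u us = foldr (\<lambda>x acc. seq_append (if x mod 2 = 1 then inv_code (seq_nth us (x div 2))
      else seq_nth us (x div 2)) acc) (list_decode u) 0"

lemma subst_code_word_code:
  "subst_code (word_code w) us = word_code (word_subst (\<lambda>i. word_decode (seq_nth us i)) w)"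
proof (induction w)
  case Nil
  then show ?case by (simp add: subst_code_def word_subst_def word_code_def)
next
  case (Cons l w)
  have l: "letter_code l mod 2 = Suc 0 \<longleftrightarrow> snd l" "letter_code l mod 2 = 0 \<longleftrightarrow> \<not> snd l"
      "letter_code l div 2 = fst l"
    by (cases l; auto simp: letter_code_def)+
  obtain v where v: "seq_nth us (fst l) = word_code v"
    by (metis word_code_decode)
  have "subst_code (word_code (l # w)) us = seq_append (if snd l then inv_code (word_code v)
      else word_code v) (subst_code (word_code w) us)"
    by (simp add: subst_code_def word_code_def l v)
  then show ?case
    using Cons by (cases "snd l") (simp_all add: word_subst_def v)
qed

lemma computable_subst_code:
  assumes "computable n A" "computable n B"
  shows "computable n (\<lambda>xs. subst_code (A xs) (B xs))"
proof -
  let ?S = "\<lambda>x acc xs. seq_append (if x mod 2 = 1 then inv_code (seq_nth (xs ! 1) (x div 2))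
      else seq_nth (xs ! 1) (x div 2)) acc"
  have "computable 2 (\<lambda>xs. foldr (\<lambda>x acc. ?S x acc xs) (list_decode (xs ! 0)) 0)"
    by (rule computable_foldr)
      (intro computable_intros computable_seq_append computable_inv_code computable_seq_nth
        computable_div computable_mod | simp)+
  from computable_apply2[where h = subst_code, OF this[folded subst_code_def] assms] show ?thesis .
qed

section \<open>Kleene normal form\<close>

definition triple_encode :: "nat \<Rightarrow> nat \<Rightarrow> nat \<Rightarrow> nat" where
  "triple_encode a b c = prod_encode (a, prod_encode (b, c))"

definition triple_fst :: "nat \<Rightarrow> nat" where
  "triple_fst t = fst (prod_decode t)"

definition triple_snd :: "nat \<Rightarrow> nat" where
  "triple_snd t = fst (prod_decode (snd (prod_decode t)))"

definition triple_thd :: "nat \<Rightarrow> nat" where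
  "triple_thd t = snd (prod_decode (snd (prod_decode t)))"

lemma triple_sel [simp]:
  "triple_fst (triple_encode a b c) = a"
  "triple_snd (triple_encode a b c) = b"
  "triple_thd (triple_encode a b c) = c"
  by (simp_all add: triple_fst_def triple_snd_def triple_thd_def triple_encode_def)

lemma computable_triple_sel:
  "computable n A \<Longrightarrow> computable n (\<lambda>xs. triple_fst (A xs))"
  "computable n A \<Longrightarrow> computable n (\<lambda>xs. triple_snd (A xs))"
  "computable n A \<Longrightarrow> computable n (\<lambda>xs. triple_thd (A xs))"
  unfolding triple_fst_def triple_snd_def triple_thd_def
  by (intro computable_fst_prod_decode computable_snd_prod_decode; assumption)+

lemmas computable_seq_intros = computable_intros computable_fst_prod_decode
  computable_snd_prod_decode computable_seq_hd computable_seq_tl computable_seq_cons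
  computable_seq_drop computable_seq_nth computable_seq_length computable_seq_append
  computable_flip_code computable_inv_code computable_triple_sel decidable_comp3

lemma ex_seq_witness: "(\<forall>j<m. \<exists>t. P j t) \<longleftrightarrow> (\<exists>c. \<forall>j<m. P j (seq_nth c j))"
proof
  assume "\<forall>j<m. \<exists>t. P j t"
  then obtain w where "\<forall>j<m. P j (w j)" by metis
  then show "\<exists>c. \<forall>j<m. P j (seq_nth c j)"
    by (intro exI[of _ "list_encode (map w [0..<m])"]) simp
qed blast

text \<open>The witness \<open>t\<close> encodes a terminating computation of \<open>f\<close>.\<close>
definition graph_predicate :: "recf \<Rightarrow> (nat list \<Rightarrow> bool) \<Rightarrow> bool" where
  "graph_predicate f T \<longleftrightarrow> decidable 3 T \<and> (\<forall>xs y. reval f xs y \<longleftrightarrow> (\<exists>t. T [list_encode xs, y, t]))"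

lemma graph_predicateI:
  "decidable 3 T \<Longrightarrow> (\<And>xs y. reval f xs y \<longleftrightarrow> (\<exists>t. T [list_encode xs, y, t])) \<Longrightarrow>
    graph_predicate f T"
  unfolding graph_predicate_def by blast

lemma graph_predicate_decidable: "graph_predicate f T \<Longrightarrow> decidable 3 T"
  unfolding graph_predicate_def by blast

lemma graph_predicate_reval_iff:
  "graph_predicate f T \<Longrightarrow> reval f xs y \<longleftrightarrow> (\<exists>t. T [list_encode xs, y, t])"
  unfolding graph_predicate_def by blast

inductive_cases reval_ZrE: "reval Zr xs y"
inductive_cases reval_ScE: "reval Sc xs y"
inductive_cases reval_ProjE: "reval (Proj i) xs y"
inductive_cases reval_CnE: "reval (Cn f gs) xs y"
inductive_cases reval_Pr_NilE: "reval (Pr f g) [] y"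
inductive_cases reval_Pr_0E: "reval (Pr f g) (0 # xs) y"
inductive_cases reval_Pr_SucE: "reval (Pr f g) (Suc n # xs) y"
inductive_cases reval_MnE: "reval (Mn f) xs y"

lemma graph_predicate_Zr: "graph_predicate Zr (\<lambda>v. v ! 1 = 0)"
  by (rule graph_predicateI) (auto intro!: computable_seq_intros elim: reval_ZrE intro: reval.intros)

lemma graph_predicate_Sc: "graph_predicate Sc (\<lambda>v. v ! 0 \<noteq> 0 \<and> v ! 1 = Suc (seq_hd (v ! 0)))"
proof (rule graph_predicateI)
  show "decidable 3 (\<lambda>v. v ! 0 \<noteq> 0 \<and> v ! 1 = Suc (seq_hd (v ! 0)))"
    by (intro computable_seq_intros | simp)+
  show "reval Sc xs y \<longleftrightarrow> (\<exists>t. [list_encode xs, y, t] ! 0 \<noteq> 0 \<and>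
      [list_encode xs, y, t] ! 1 = Suc (seq_hd ([list_encode xs, y, t] ! 0)))" for xs y
    by (cases xs) (auto elim: reval_ScE intro: reval.intros)
qed

lemma graph_predicate_Proj:
  "graph_predicate (Proj i) (\<lambda>v. i < seq_length (v ! 0) \<and> v ! 1 = seq_nth (v ! 0) i)"
proof (rule graph_predicateI)
  show "decidable 3 (\<lambda>v. i < seq_length (v ! 0) \<and> v ! 1 = seq_nth (v ! 0) i)"
    by (intro computable_seq_intros | simp)+
  show "reval (Proj i) xs y \<longleftrightarrow> (\<exists>t. i < seq_length ([list_encode xs, y, t] ! 0) \<and>
      [list_encode xs, y, t] ! 1 = seq_nth ([list_encode xs, y, t] ! 0) i)" for xs y
    by (auto elim: reval_ProjE intro: reval.intros)
qed

definition Cn_graph ::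
    "(nat list \<Rightarrow> bool) \<Rightarrow> (nat \<Rightarrow> nat list \<Rightarrow> bool) \<Rightarrow> nat \<Rightarrow> nat list \<Rightarrow> bool" where
  "Cn_graph Tf Tg m = (\<lambda>v. seq_length (triple_fst (v ! 2)) = m \<and>
     (\<forall>j<m. Tg j [v ! 0, seq_nth (triple_fst (v ! 2)) j, seq_nth (triple_snd (v ! 2)) j]) \<and>
     Tf [triple_fst (v ! 2), v ! 1, triple_thd (v ! 2)])"

lemma Cn_graph_iff:
  "(\<exists>t. Cn_graph Tf Tg m [c, z, t]) \<longleftrightarrow>
    (\<exists>ys. length ys = m \<and> (\<forall>j<m. \<exists>t. Tg j [c, ys ! j, t]) \<and> (\<exists>t. Tf [list_encode ys, z, t]))"
proof
  assume "\<exists>t. Cn_graph Tf Tg m [c, z, t]"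
  then obtain t where t: "seq_length (triple_fst t) = m"
      "\<forall>j<m. Tg j [c, seq_nth (triple_fst t) j, seq_nth (triple_snd t) j]"
      "Tf [triple_fst t, z, triple_thd t]"
    by (auto simp: Cn_graph_def)
  then show "\<exists>ys. length ys = m \<and> (\<forall>j<m. \<exists>t. Tg j [c, ys ! j, t]) \<and> (\<exists>t. Tf [list_encode ys, z, t])"
    by (intro exI[of _ "list_decode (triple_fst t)"]) (auto simp: seq_length_def seq_nth_eq)
next
  assume "\<exists>ys. length ys = m \<and> (\<forall>j<m. \<exists>t. Tg j [c, ys ! j, t]) \<and> (\<exists>t. Tf [list_encode ys, z, t])"
  then obtain ys w tf where "length ys = m" "\<forall>j<m. Tg j [c, ys ! j, seq_nth w j]"
      "Tf [list_encode ys, z, tf]"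
    unfolding ex_seq_witness by blast
  then show "\<exists>t. Cn_graph Tf Tg m [c, z, t]"
    by (intro exI[of _ "triple_encode (list_encode ys) w tf"]) (simp add: Cn_graph_def)
qed

lemma reval_Cn_iff: "reval (Cn f gs) xs z \<longleftrightarrow> (\<exists>ys. list_all2 (\<lambda>g y. reval g xs y) gs ys \<and> reval f ys z)"
  by (auto elim: reval_CnE intro: reval.comp)

lemma graph_predicate_Cn:
  assumes f: "graph_predicate f Tf" and gs: "\<And>j. j < length gs \<Longrightarrow> graph_predicate (gs ! j) (Tg j)"
  shows "graph_predicate (Cn f gs) (Cn_graph Tf Tg (length gs))"
proof (rule graph_predicateI)
  show "decidable 3 (Cn_graph Tf Tg (length gs))"
    unfolding Cn_graph_def
    using graph_predicate_decidable[OF f] graph_predicate_decidable[OF gs]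
    by (intro computable_seq_intros decidable_all_below | assumption | simp)+
  fix xs z
  have "reval (Cn f gs) xs z \<longleftrightarrow> (\<exists>ys. length ys = length gs \<and>
      (\<forall>j<length gs. reval (gs ! j) xs (ys ! j)) \<and> reval f ys z)"
    unfolding reval_Cn_iff list_all2_conv_all_nth by (metis (no_types))
  also have "\<dots> \<longleftrightarrow> (\<exists>ys. length ys = length gs \<and>
      (\<forall>j<length gs. \<exists>t. Tg j [list_encode xs, ys ! j, t]) \<and> (\<exists>t. Tf [list_encode ys, z, t]))"
    by (simp add: graph_predicate_reval_iff[OF f] graph_predicate_reval_iff[OF gs])
  also have "\<dots> \<longleftrightarrow> (\<exists>t. Cn_graph Tf Tg (length gs) [list_encode xs, z, t])"
    by (rule Cn_graph_iff[symmetric])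
  finally show "reval (Cn f gs) xs z \<longleftrightarrow> (\<exists>t. Cn_graph Tf Tg (length gs) [list_encode xs, z, t])" .
qed

lemma reval_Pr_iff:
  "reval (Pr f g) (n # xs) y \<longleftrightarrow> (\<exists>vs. length vs = Suc n \<and> reval f xs (vs ! 0) \<and>
      (\<forall>i<n. reval g (i # vs ! i # xs) (vs ! Suc i)) \<and> y = vs ! n)"
proof (induction n arbitrary: y)
  case 0
  show ?case
  proof
    assume "reval (Pr f g) (0 # xs) y"
    then show "\<exists>vs. length vs = Suc 0 \<and> reval f xs (vs ! 0) \<and>
        (\<forall>i<0. reval g (i # vs ! i # xs) (vs ! Suc i)) \<and> y = vs ! 0"
      by (intro exI[of _ "[y]"]) (auto elim: reval_Pr_0E)
  qed (auto intro: reval.pr0)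
next
  case (Suc n)
  show ?case
  proof
    assume "reval (Pr f g) (Suc n # xs) y"
    then obtain y0 where y0: "reval (Pr f g) (n # xs) y0" "reval g (n # y0 # xs) y"
      by (rule reval_Pr_SucE)
    obtain vs where vs: "length vs = Suc n" "reval f xs (vs ! 0)"
        "\<forall>i<n. reval g (i # vs ! i # xs) (vs ! Suc i)" "y0 = vs ! n"
      using Suc.IH y0(1) by blast
    show "\<exists>vs. length vs = Suc (Suc n) \<and> reval f xs (vs ! 0) \<and>
        (\<forall>i<Suc n. reval g (i # vs ! i # xs) (vs ! Suc i)) \<and> y = vs ! Suc n"
      by (intro exI[of _ "vs @ [y]"]) (use vs y0(2) in \<open>auto simp: nth_append less_Suc_eq\<close>)
  next
    assume "\<exists>vs. length vs = Suc (Suc n) \<and> reval f xs (vs ! 0) \<and>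
        (\<forall>i<Suc n. reval g (i # vs ! i # xs) (vs ! Suc i)) \<and> y = vs ! Suc n"
    then obtain vs where vs: "length vs = Suc (Suc n)" "reval f xs (vs ! 0)"
        "\<forall>i<Suc n. reval g (i # vs ! i # xs) (vs ! Suc i)" "y = vs ! Suc n"
      by blast
    have "reval (Pr f g) (n # xs) (vs ! n)"
      using vs by (intro iffD2[OF Suc.IH] exI[of _ "take (Suc n) vs"]) auto
    then show "reval (Pr f g) (Suc n # xs) y"
      using vs by (auto intro: reval.prS)
  qed
qed

definition Pr_graph :: "(nat list \<Rightarrow> bool) \<Rightarrow> (nat list \<Rightarrow> bool) \<Rightarrow> nat list \<Rightarrow> bool" where
  "Pr_graph Tf Tg = (\<lambda>v. v ! 0 \<noteq> 0 \<and> seq_length (triple_fst (v ! 2)) = Suc (seq_hd (v ! 0)) \<and>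
     Tf [seq_tl (v ! 0), seq_nth (triple_fst (v ! 2)) 0, triple_thd (v ! 2)] \<and>
     (\<forall>i<seq_hd (v ! 0). Tg [seq_cons i (seq_cons (seq_nth (triple_fst (v ! 2)) i) (seq_tl (v ! 0))),
        seq_nth (triple_fst (v ! 2)) (Suc i), seq_nth (triple_snd (v ! 2)) i]) \<and>
     v ! 1 = seq_nth (triple_fst (v ! 2)) (seq_hd (v ! 0)))"

lemma Pr_graph_iff:
  "(\<exists>t. Pr_graph Tf Tg [list_encode (n # xs), y, t]) \<longleftrightarrow>
    (\<exists>vs. length vs = Suc n \<and> (\<exists>t. Tf [list_encode xs, vs ! 0, t]) \<and>
      (\<forall>i<n. \<exists>t. Tg [list_encode (i # vs ! i # xs), vs ! Suc i, t]) \<and> y = vs ! n)"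
proof
  assume "\<exists>t. Pr_graph Tf Tg [list_encode (n # xs), y, t]"
  then obtain t where t: "seq_length (triple_fst t) = Suc n"
      "Tf [list_encode xs, seq_nth (triple_fst t) 0, triple_thd t]"
      "\<forall>i<n. Tg [list_encode (i # seq_nth (triple_fst t) i # xs),
         seq_nth (triple_fst t) (Suc i), seq_nth (triple_snd t) i]"
      "y = seq_nth (triple_fst t) n"
    by (auto simp: Pr_graph_def seq_cons_def)
  then show "\<exists>vs. length vs = Suc n \<and> (\<exists>t. Tf [list_encode xs, vs ! 0, t]) \<and>
      (\<forall>i<n. \<exists>t. Tg [list_encode (i # vs ! i # xs), vs ! Suc i, t]) \<and> y = vs ! n"
    by (intro exI[of _ "list_decode (triple_fst t)"]) (auto simp: seq_length_def seq_nth_eq)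
next
  assume "\<exists>vs. length vs = Suc n \<and> (\<exists>t. Tf [list_encode xs, vs ! 0, t]) \<and>
      (\<forall>i<n. \<exists>t. Tg [list_encode (i # vs ! i # xs), vs ! Suc i, t]) \<and> y = vs ! n"
  then obtain vs w tf where "length vs = Suc n" "Tf [list_encode xs, vs ! 0, tf]"
      "\<forall>i<n. Tg [list_encode (i # vs ! i # xs), vs ! Suc i, seq_nth w i]" "y = vs ! n"
    unfolding ex_seq_witness by blast
  moreover have "list_encode (n # xs) \<noteq> 0"
    by simp
  ultimately show "\<exists>t. Pr_graph Tf Tg [list_encode (n # xs), y, t]"
    by (intro exI[of _ "triple_encode (list_encode vs) w tf"])
      (simp add: Pr_graph_def del: list_encode.simps)
qed

lemma graph_predicate_Pr:
  assumes f: "graph_predicate f Tf" and g: "graph_predicate g Tg"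
  shows "graph_predicate (Pr f g) (Pr_graph Tf Tg)"
proof (rule graph_predicateI)
  show "decidable 3 (Pr_graph Tf Tg)"
    unfolding Pr_graph_def
    using graph_predicate_decidable[OF f] graph_predicate_decidable[OF g]
    by (intro computable_seq_intros decidable_bounded_all | assumption | simp)+
  show "reval (Pr f g) xs y \<longleftrightarrow> (\<exists>t. Pr_graph Tf Tg [list_encode xs, y, t])" for xs y
  proof (cases xs)
    case Nil
    then show ?thesis by (auto simp: Pr_graph_def elim: reval_Pr_NilE)
  next
    case (Cons n xs')
    then show ?thesis
      unfolding Cons reval_Pr_iff Pr_graph_iff
      by (simp add: graph_predicate_reval_iff[OF f] graph_predicate_reval_iff[OF g]
          del: list_encode.simps)
  qed
qed

definition Mn_graph :: "(nat list \<Rightarrow> bool) \<Rightarrow> nat list \<Rightarrow> bool" where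
  "Mn_graph Tf = (\<lambda>v. Tf [seq_cons (v ! 1) (v ! 0), 0, triple_fst (v ! 2)] \<and>
     (\<forall>m<v ! 1. seq_nth (triple_snd (v ! 2)) m \<noteq> 0 \<and>
        Tf [seq_cons m (v ! 0), seq_nth (triple_snd (v ! 2)) m, seq_nth (triple_thd (v ! 2)) m]))"

lemma Mn_graph_iff:
  "(\<exists>t. Mn_graph Tf [c, n, t]) \<longleftrightarrow>
    (\<exists>t. Tf [seq_cons n c, 0, t]) \<and> (\<forall>m<n. \<exists>y. y \<noteq> 0 \<and> (\<exists>t. Tf [seq_cons m c, y, t]))"
proof
  assume "(\<exists>t. Tf [seq_cons n c, 0, t]) \<and> (\<forall>m<n. \<exists>y. y \<noteq> 0 \<and> (\<exists>t. Tf [seq_cons m c, y, t]))"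
  then obtain t0 ys where "Tf [seq_cons n c, 0, t0]"
      "\<forall>m<n. seq_nth ys m \<noteq> 0 \<and> (\<exists>t. Tf [seq_cons m c, seq_nth ys m, t])"
    using ex_seq_witness[where P = "\<lambda>m y. y \<noteq> 0 \<and> (\<exists>t. Tf [seq_cons m c, y, t])"] by auto
  moreover from this(2) have "\<forall>m<n. \<exists>t. Tf [seq_cons m c, seq_nth ys m, t]"
    by blast
  then obtain ts where "\<forall>m<n. Tf [seq_cons m c, seq_nth ys m, seq_nth ts m]"
    unfolding ex_seq_witness by blast
  ultimately show "\<exists>t. Mn_graph Tf [c, n, t]"
    by (intro exI[of _ "triple_encode t0 ys ts"]) (simp add: Mn_graph_def)
next
  assume "\<exists>t. Mn_graph Tf [c, n, t]"
  then show "(\<exists>t. Tf [seq_cons n c, 0, t]) \<and> (\<forall>m<n. \<exists>y. y \<noteq> 0 \<and> (\<exists>t. Tf [seq_cons m c, y, t]))"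
    unfolding Mn_graph_def by (metis nth_Cons_0 nth_Cons_Suc One_nat_def numeral_2_eq_2)
qed

lemma graph_predicate_Mn:
  assumes f: "graph_predicate f Tf"
  shows "graph_predicate (Mn f) (Mn_graph Tf)"
proof (rule graph_predicateI)
  show "decidable 3 (Mn_graph Tf)"
    unfolding Mn_graph_def using graph_predicate_decidable[OF f]
    by (intro computable_seq_intros decidable_bounded_all | assumption | simp)+
  have "reval (Mn f) xs n \<longleftrightarrow> reval f (n # xs) 0 \<and> (\<forall>m<n. \<exists>y. y \<noteq> 0 \<and> reval f (m # xs) y)"
    for xs n by (auto elim: reval_MnE intro: reval.mn)
  then show "reval (Mn f) xs n \<longleftrightarrow> (\<exists>t. Mn_graph Tf [list_encode xs, n, t])" for xs n
    unfolding Mn_graph_iff using graph_predicate_reval_iff[OF f] by simp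
qed

theorem graph_predicate_exists: "\<exists>T. graph_predicate f T"
proof (induction f)
  case Zr
  then show ?case using graph_predicate_Zr by blast
next
  case Sc
  then show ?case using graph_predicate_Sc by blast
next
  case (Proj i)
  then show ?case using graph_predicate_Proj by blast
next
  case (Cn f gs)
  obtain Tf where "graph_predicate f Tf" using Cn.IH(1) by blast
  moreover have "\<forall>j<length gs. \<exists>T. graph_predicate (gs ! j) T"
    using Cn.IH(2) by simp
  then obtain Tg where "\<And>j. j < length gs \<Longrightarrow> graph_predicate (gs ! j) (Tg j)"
    by metis
  ultimately show ?case by (blast intro: graph_predicate_Cn)
next
  case (Pr f g)
  then show ?case by (blast intro: graph_predicate_Pr)
next
  case (Mn f)
  then show ?case by (blast intro: graph_predicate_Mn)
qed

section \<open>Recursively enumerable sets\<close>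

definition sigma1 :: "nat set \<Rightarrow> bool" where
  "sigma1 A \<longleftrightarrow> (\<exists>P. decidable 2 P \<and> (\<forall>n. n \<in> A \<longleftrightarrow> (\<exists>t. P [n, t])))"

lemma sigma1I: "decidable 2 P \<Longrightarrow> (\<And>n. n \<in> A \<longleftrightarrow> (\<exists>t. P [n, t])) \<Longrightarrow> sigma1 A"
  unfolding sigma1_def by blast

lemma computable_set_iff_decidable: "computable_set A \<longleftrightarrow> decidable 1 (\<lambda>xs. xs ! 0 \<in> A)"
proof
  assume "computable_set A"
  then obtain f where f: "\<And>n. reval f [n] (if n \<in> A then 1 else 0)"
    unfolding computable_set_def by blast
  have "reval f xs (if xs ! 0 \<in> A then 1 else 0)" if "length xs = 1" for xs
    using f[of "xs ! 0"] that by (metis One_nat_def length_0_conv length_Suc_conv nth_Cons_0)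
  then show "decidable 1 (\<lambda>xs. xs ! 0 \<in> A)"
    unfolding decidable_def computable_def by blast
next
  assume "decidable 1 (\<lambda>xs. xs ! 0 \<in> A)"
  then show "computable_set A"
    unfolding decidable_def computable_def computable_set_def by (metis length_Cons list.size(3) nth_Cons_0 One_nat_def)
qed

lemma decidable_mem_computable_set:
  "computable_set B \<Longrightarrow> computable n A \<Longrightarrow> decidable n (\<lambda>xs. A xs \<in> B)"
  unfolding computable_set_iff_decidable using decidable_comp1 by fastforce

lemma re_set_imp_sigma1:
  assumes "re_set A"
  shows "sigma1 A"
proof -
  obtain f where f: "\<And>n. n \<in> A \<longleftrightarrow> (\<exists>y. reval f [n] y)"
    using assms unfolding re_set_def by blast
  obtain T where T: "graph_predicate f T"
    using graph_predicate_exists by blast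
  show ?thesis
  proof (rule sigma1I)
    show "decidable 2 (\<lambda>v. T [seq_cons (v ! 0) 0, triple_fst (v ! 1), triple_snd (v ! 1)])"
      using graph_predicate_decidable[OF T] by (intro computable_seq_intros | assumption | simp)+
    have "n \<in> A \<longleftrightarrow> (\<exists>y t. T [seq_cons n 0, y, t])" for n
      using f graph_predicate_reval_iff[OF T, of "[n]"] by (simp add: seq_cons_def)
    also have "\<dots> n \<longleftrightarrow> (\<exists>t. T [seq_cons n 0, triple_fst t, triple_snd t])" for n
      by (metis triple_sel(1,2))
    finally show "n \<in> A \<longleftrightarrow> (\<exists>t. T [seq_cons ([n, t] ! 0) 0, triple_fst ([n, t] ! 1),
        triple_snd ([n, t] ! 1)])" for n
      by simp
  qed
qed

text \<open>Post's theorem: search for a witness of membership in \<open>A\<close> or in its complement.\<close>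
theorem computable_set_if_sigma1_compl:
  assumes "sigma1 A" and "sigma1 (- A)"
  shows "computable_set A"
proof -
  obtain P where P: "decidable 2 P" "\<And>n. n \<in> A \<longleftrightarrow> (\<exists>t. P [n, t])"
    using assms(1) unfolding sigma1_def by blast
  obtain Q where Q: "decidable 2 Q" "\<And>n. n \<notin> A \<longleftrightarrow> (\<exists>t. Q [n, t])"
    using assms(2) unfolding sigma1_def by blast
  let ?t = "\<lambda>xs. LEAST t. P [xs ! 0, t] \<or> Q [xs ! 0, t]"
  have "computable 1 ?t"
  proof (rule computable_Least)
    show "decidable (Suc 1) (\<lambda>ys. P [drop 1 ys ! 0, ys ! 0] \<or> Q [drop 1 ys ! 0, ys ! 0])"
      by (intro decidable_disj decidable_comp2 P(1) Q(1) computable_drop_nth computable_nth) simp_all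
    show "\<exists>t. P [xs ! 0, t] \<or> Q [xs ! 0, t]" for xs
      using P(2) Q(2) by blast
  qed
  then have "decidable 1 (\<lambda>xs. P [xs ! 0, ?t xs])"
    by (intro decidable_comp2 P(1) computable_nth) simp_all
  moreover have "P [xs ! 0, ?t xs] \<longleftrightarrow> xs ! 0 \<in> A" for xs
  proof -
    have "P [xs ! 0, ?t xs] \<or> Q [xs ! 0, ?t xs]"
      by (rule LeastI_ex) (use P(2) Q(2) in blast)
    then show ?thesis using P(2) Q(2) by blast
  qed
  ultimately show ?thesis
    unfolding computable_set_iff_decidable by simp
qed

lemma sigma1_preimage:
  assumes "sigma1 B" and "computable 1 (\<lambda>xs. F (xs ! 0))"
  shows "sigma1 {n. F n \<in> B}"
proof -
  obtain P where P: "decidable 2 P" "\<And>n. n \<in> B \<longleftrightarrow> (\<exists>t. P [n, t])"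
    using assms(1) unfolding sigma1_def by blast
  have "computable 2 (\<lambda>v. F (v ! 0))"
    using computable_apply1[OF assms(2) computable_nth, of 0 2] by simp
  then have "decidable 2 (\<lambda>v. P [F (v ! 0), v ! 1])"
    by (intro decidable_comp2 P(1) computable_nth) simp_all
  then show ?thesis
    by (rule sigma1I) (simp add: P(2))
qed

section \<open>Evaluating words in groups\<close>

lemma eval_word_Nil [simp]: "eval_word G a [] = \<one>\<^bsub>G\<^esub>"
  by (simp add: eval_word_def)

lemma eval_word_Cons:
  "eval_word G a (l # w) = (if snd l then inv\<^bsub>G\<^esub> (a (fst l)) else a (fst l)) \<otimes>\<^bsub>G\<^esub> eval_word G a w"
  by (simp add: eval_word_def)

lemma eval_word_cong:
  "(\<And>l. l \<in> set w \<Longrightarrow> a (fst l) = b (fst l)) \<Longrightarrow> eval_word G a w = eval_word G b w"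
  by (induction w) (auto simp: eval_word_Cons)

lemma eval_eqn_map_Inr: "eval_eqn G as (map Inr w) = eval_word G (\<lambda>i. as ! i) w"
  by (induction w) (auto simp: eval_eqn_def eval_word_def)

context group
begin

lemma eval_word_closed: "(\<And>i. a i \<in> carrier G) \<Longrightarrow> eval_word G a w \<in> carrier G"
  by (induction w) (auto simp: eval_word_Cons)

lemma eval_word_append:
  "(\<And>i. a i \<in> carrier G) \<Longrightarrow> eval_word G a (u @ v) = eval_word G a u \<otimes> eval_word G a v"
  by (induction u) (auto simp: eval_word_Cons eval_word_closed m_assoc)

lemma eval_word_inv:
  assumes a: "\<And>i. a i \<in> carrier G"
  shows "eval_word G a (word_inv u) = inv (eval_word G a u)"
proof (induction u)
  case Nil
  then show ?case by (simp add: word_inv_def)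
next
  case (Cons l u)
  have "eval_word G a (word_inv (l # u)) = inv (eval_word G a u) \<otimes> eval_word G a [flip_letter l]"
    using Cons a by (simp add: word_inv_def eval_word_append)
  also have "\<dots> = inv ((if snd l then inv (a (fst l)) else a (fst l)) \<otimes> eval_word G a u)"
    using a by (simp add: eval_word_Cons flip_letter_def inv_mult_group eval_word_closed)
  finally show ?case by (simp add: eval_word_Cons)
qed

lemma eval_word_cancel:
  assumes a: "\<And>i. a i \<in> carrier G"
  shows "eval_word G a (u @ x # flip_letter x # v) = eval_word G a (u @ v)"
proof -
  have "eval_word G a (x # flip_letter x # v) = eval_word G a [x, flip_letter x] \<otimes> eval_word G a v"
    using eval_word_append[of a "[x, flip_letter x]" v] a by simp
  also have "\<dots> = eval_word G a v"
    using a by (simp add: eval_word_Cons flip_letter_def eval_word_closed)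
  finally show ?thesis
    using a by (simp add: eval_word_append)
qed

lemma eval_word_normal_closure_words:
  assumes a: "\<And>i. a i \<in> carrier G" and R: "\<And>r. r \<in> R \<Longrightarrow> eval_word G a r = \<one>"
    and w: "w \<in> normal_closure_words k R"
  shows "eval_word G a w = \<one>"
  using w
proof (induction rule: normal_closure_words.induct)
  case (rel w)
  then show ?case using R by blast
next
  case empty
  then show ?case by simp
next
  case (mult u v)
  then show ?case using a by (simp add: eval_word_append)
next
  case (inv u)
  then show ?case using a by (simp add: eval_word_inv)
next
  case (conj u x)
  then show ?case using a by (simp add: eval_word_append eval_word_Cons flip_letter_def)
next
  case (ins u v x)
  then show ?case using a by (simp add: eval_word_cancel)
next
  case (del u x v)
  then show ?case using a by (simp add: eval_word_cancel)
qed

lemma generate_eval_word: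
  assumes b: "\<And>i. b i \<in> carrier G" and x: "x \<in> generate G (range b)"
  shows "\<exists>u. eval_word G b u = x"
  using x
proof (induction rule: generate.induct)
  case one
  then show ?case by (intro exI[of _ "[]"]) simp
next
  case (incl h)
  then obtain i where "h = b i" by blast
  then show ?case using b by (intro exI[of _ "[(i, False)]"]) (simp add: eval_word_Cons)
next
  case (inv h)
  then obtain i where "h = b i" by blast
  then show ?case using b by (intro exI[of _ "[(i, True)]"]) (simp add: eval_word_Cons)
next
  case (eng h1 h2)
  then obtain u1 u2 where "eval_word G b u1 = h1" "eval_word G b u2 = h2" by blast
  then show ?case using b by (intro exI[of _ "u1 @ u2"]) (simp add: eval_word_append)
qed

lemma eval_word_word_subst:
  assumes "\<And>i. b i \<in> carrier G"
  shows "eval_word G b (word_subst \<sigma> w) = eval_word G (\<lambda>i. eval_word G b (\<sigma> i)) w"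
  using assms
  by (induction w) (simp_all add: word_subst_def eval_word_append eval_word_inv eval_word_Cons)

lemma eval_word_pad_one:
  assumes "\<And>i. i < k \<Longrightarrow> g i \<in> carrier G"
  shows "eval_word G (\<lambda>i. if i < k then g i else \<one>) w = eval_word G g (filter (\<lambda>l. fst l < k) w)"
proof -
  have "eval_word G g (filter (\<lambda>l. fst l < k) w) =
      eval_word G (\<lambda>i. if i < k then g i else \<one>) (filter (\<lambda>l. fst l < k) w)"
    by (rule eval_word_cong) auto
  moreover have "eval_word G (\<lambda>i. if i < k then g i else \<one>) w =
      eval_word G (\<lambda>i. if i < k then g i else \<one>) (filter (\<lambda>l. fst l < k) w)"
    using assms by (induction w) (auto simp: eval_word_Cons eval_word_closed)
  ultimately show ?thesis by simp
qed

end

lemma hom_eval_word: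
  assumes "group G" "group H" "\<phi> \<in> hom H G" "\<And>i. g i \<in> carrier H"
  shows "\<phi> (eval_word H g w) = eval_word G (\<lambda>i. \<phi> (g i)) w"
proof (induction w)
  case Nil
  then show ?case using assms hom_one by simp
next
  case (Cons l w)
  have \<phi>: "group_hom H G \<phi>"
    using assms by (simp add: group_hom_def group_hom_axioms_def)
  have "eval_word H g w \<in> carrier H"
    using assms group.eval_word_closed by metis
  with Cons assms show ?case
    by (simp add: eval_word_Cons hom_mult group_hom.hom_inv[OF \<phi>] group.inv_closed)
qed

section \<open>Derivations in the normal closure\<close>

inductive derivation_step :: "nat \<Rightarrow> word set \<Rightarrow> word set \<Rightarrow> word \<Rightarrow> bool" for k R P where
  rel: "w \<in> R \<Longrightarrow> derivation_step k R P w"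
| empty: "derivation_step k R P []"
| mult: "u \<in> P \<Longrightarrow> v \<in> P \<Longrightarrow> derivation_step k R P (u @ v)"
| inv: "u \<in> P \<Longrightarrow> derivation_step k R P (word_inv u)"
| conj: "u \<in> P \<Longrightarrow> fst x < k \<Longrightarrow> derivation_step k R P ([x] @ u @ [flip_letter x])"
| ins: "u @ v \<in> P \<Longrightarrow> fst x < k \<Longrightarrow> derivation_step k R P (u @ [x, flip_letter x] @ v)"
| del: "u @ [x, flip_letter x] @ v \<in> P \<Longrightarrow> derivation_step k R P (u @ v)"

definition derivation :: "nat \<Rightarrow> word set \<Rightarrow> word list \<Rightarrow> bool" where
  "derivation k R ws \<longleftrightarrow> (\<forall>j<length ws. derivation_step k R (set (take j ws)) (ws ! j))"

lemma derivation_step_mono: "derivation_step k R P w \<Longrightarrow> P \<subseteq> P' \<Longrightarrow> derivation_step k R P' w"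
  by (induction rule: derivation_step.induct) (blast intro: derivation_step.intros)+

lemma derivation_append:
  assumes "derivation k R ws" and "derivation k R ws'"
  shows "derivation k R (ws @ ws')"
  unfolding derivation_def
proof (intro allI impI)
  fix j assume j: "j < length (ws @ ws')"
  show "derivation_step k R (set (take j (ws @ ws'))) ((ws @ ws') ! j)"
  proof (cases "j < length ws")
    case True
    then show ?thesis using assms(1) by (simp add: derivation_def nth_append)
  next
    case False
    then have "derivation_step k R (set (take (j - length ws) ws')) (ws' ! (j - length ws))"
      using assms(2) j by (simp add: derivation_def)
    then show ?thesis
      using False by (auto simp: nth_append intro: derivation_step_mono)
  qed
qed

lemma derivation_snoc:
  "derivation k R ws \<Longrightarrow> derivation_step k R (set ws) w \<Longrightarrow> derivation k R (ws @ [w])"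
  unfolding derivation_def by (auto simp: nth_append less_Suc_eq)

lemma derivation_step_normal_closure_words:
  "derivation_step k R P w \<Longrightarrow> P \<subseteq> normal_closure_words k R \<Longrightarrow> w \<in> normal_closure_words k R"
  by (induction rule: derivation_step.induct) (blast intro: normal_closure_words.intros)+

lemma derivation_sound:
  assumes "derivation k R ws" and "j < length ws"
  shows "ws ! j \<in> normal_closure_words k R"
  using assms(2)
proof (induction j rule: less_induct)
  case (less j)
  have "derivation_step k R (set (take j ws)) (ws ! j)"
    using assms(1) less.prems derivation_def by blast
  moreover have "set (take j ws) \<subseteq> normal_closure_words k R"
    using less by (auto simp: set_conv_nth)
  ultimately show ?case
    by (rule derivation_step_normal_closure_words)
qed

lemma derivation_extend:
  "derivation k R ws \<Longrightarrow> derivation_step k R (set ws) w \<Longrightarrow> \<exists>ws'. derivation k R ws' \<and> w \<in> set ws'"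
  using derivation_snoc by fastforce

lemma derivation_Nil: "derivation k R []"
  by (simp add: derivation_def)

lemma derivation_complete:
  assumes "w \<in> normal_closure_words k R"
  shows "\<exists>ws. derivation k R ws \<and> w \<in> set ws"
  using assms
proof (induction rule: normal_closure_words.induct)
  case (rel w)
  then show ?case by (intro derivation_extend[OF derivation_Nil] derivation_step.rel)
next
  case empty
  then show ?case by (intro derivation_extend[OF derivation_Nil] derivation_step.empty)
next
  case (mult u v)
  then obtain ws ws' where "derivation k R ws" "u \<in> set ws" "derivation k R ws'" "v \<in> set ws'"
    by blast
  then show ?case
    by (intro derivation_extend[OF derivation_append[of k R ws ws']] derivation_step.mult) auto
next
  case (inv u)
  then obtain ws where "derivation k R ws" "u \<in> set ws" by blast
  then show ?case by (intro derivation_extend derivation_step.inv)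
next
  case (conj u x)
  then obtain ws where "derivation k R ws" "u \<in> set ws" by blast
  then show ?case using conj.hyps(2) by (intro derivation_extend derivation_step.conj)
next
  case (ins u v x)
  then obtain ws where "derivation k R ws" "u @ v \<in> set ws" by blast
  then show ?case using ins.hyps(2) by (intro derivation_extend derivation_step.ins)
next
  case (del u x v)
  then obtain ws where "derivation k R ws" "u @ [x, flip_letter x] @ v \<in> set ws" by blast
  then show ?case by (intro derivation_extend derivation_step.del)
qed

lemma normal_closure_words_iff_derivation:
  "w \<in> normal_closure_words k R \<longleftrightarrow> (\<exists>ws. derivation k R ws \<and> w \<in> set ws)"
  using derivation_complete derivation_sound by (metis in_set_conv_nth)

text \<open>A code of a derivation step records the derived word, the words \<open>u\<close>, \<open>v\<close> and the letter
  \<open>x\<close> of the rule applied, and a witness \<open>t\<close> that the derived word is a relator.\<close>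
definition step_encode :: "nat \<Rightarrow> nat \<Rightarrow> nat \<Rightarrow> nat \<Rightarrow> nat \<Rightarrow> nat" where
  "step_encode w u v x t = triple_encode w (triple_encode u v x) t"

definition step_word :: "nat \<Rightarrow> nat" where
  "step_word s = triple_fst s"

definition step_left :: "nat \<Rightarrow> nat" where
  "step_left s = triple_fst (triple_snd s)"

definition step_right :: "nat \<Rightarrow> nat" where
  "step_right s = triple_snd (triple_snd s)"

definition step_letter :: "nat \<Rightarrow> nat" where
  "step_letter s = triple_thd (triple_snd s)"

definition step_witness :: "nat \<Rightarrow> nat" where
  "step_witness s = triple_thd s"

lemma step_sel [simp]:
  "step_word (step_encode w u v x t) = w" "step_left (step_encode w u v x t) = u"
  "step_right (step_encode w u v x t) = v" "step_letter (step_encode w u v x t) = x"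
  "step_witness (step_encode w u v x t) = t"
  by (simp_all add: step_encode_def step_word_def step_left_def step_right_def step_letter_def
      step_witness_def)

lemma computable_step_sel:
  "computable n A \<Longrightarrow> computable n (\<lambda>xs. step_word (A xs))"
  "computable n A \<Longrightarrow> computable n (\<lambda>xs. step_left (A xs))"
  "computable n A \<Longrightarrow> computable n (\<lambda>xs. step_right (A xs))"
  "computable n A \<Longrightarrow> computable n (\<lambda>xs. step_letter (A xs))"
  "computable n A \<Longrightarrow> computable n (\<lambda>xs. step_witness (A xs))"
  unfolding step_word_def step_left_def step_right_def step_letter_def step_witness_def
  by (intro computable_triple_sel; assumption)+

text \<open>\<open>PR\<close> is the decidable matrix of a \<open>\<Sigma>\<^sub>1\<close> definition of the set of relators and \<open>Q\<close> holds
  of the codes of the previously derived words.\<close>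
definition coded_step :: "(nat list \<Rightarrow> bool) \<Rightarrow> nat \<Rightarrow> (nat \<Rightarrow> bool) \<Rightarrow> nat \<Rightarrow> bool" where
  "coded_step PR k Q s \<longleftrightarrow> PR [step_word s, step_witness s] \<or> step_word s = 0 \<or>
     (Q (step_left s) \<and> Q (step_right s) \<and> step_word s = seq_append (step_left s) (step_right s)) \<or>
     (Q (step_left s) \<and> step_word s = inv_code (step_left s)) \<or>
     (Q (step_left s) \<and> step_letter s < 2 * k \<and> step_word s =
        seq_cons (step_letter s) (seq_append (step_left s) (seq_cons (flip_code (step_letter s)) 0))) \<or>
     (Q (seq_append (step_left s) (step_right s)) \<and> step_letter s < 2 * k \<and> step_word s =
        seq_append (step_left s) (seq_cons (step_letter s) (seq_cons (flip_code (step_letter s))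
          (step_right s)))) \<or>
     (Q (seq_append (step_left s) (seq_cons (step_letter s) (seq_cons (flip_code (step_letter s))
        (step_right s)))) \<and> step_word s = seq_append (step_left s) (step_right s))"

lemma coded_step_mono: "coded_step PR k Q s \<Longrightarrow> (\<And>z. Q z \<Longrightarrow> Q' z) \<Longrightarrow> coded_step PR k Q' s"
  unfolding coded_step_def by blast

lemma coded_step_sound:
  assumes R: "\<And>n t. PR [n, t] \<Longrightarrow> word_decode n \<in> R"
    and Q: "\<And>z. Q z \<Longrightarrow> word_decode z \<in> P" and step: "coded_step PR k Q s"
  shows "derivation_step k R P (word_decode (step_word s))"
  using step unfolding coded_step_def
proof (elim disjE conjE)
  assume "PR [step_word s, step_witness s]"
  then show ?thesis using R by (blast intro: derivation_step.rel)
next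
  assume "step_word s = 0"
  then show ?thesis by (simp add: derivation_step.empty)
next
  assume "Q (step_left s)" "Q (step_right s)" "step_word s = seq_append (step_left s) (step_right s)"
  then show ?thesis using Q by (simp add: word_decode_seq_append derivation_step.mult)
next
  assume "Q (step_left s)" "step_word s = inv_code (step_left s)"
  then show ?thesis using Q by (simp add: word_decode_inv_code derivation_step.inv)
next
  assume "Q (step_left s)" "step_letter s < 2 * k" "step_word s =
      seq_cons (step_letter s) (seq_append (step_left s) (seq_cons (flip_code (step_letter s)) 0))"
  then show ?thesis
    using Q derivation_step.conj[of "word_decode (step_left s)" P "letter_decode (step_letter s)" k R]
    by (simp add: word_decode_seq_cons word_decode_seq_append flip_code_eq letter_decode_less)
next
  assume a: "Q (seq_append (step_left s) (step_right s))" "step_letter s < 2 * k" "step_word s =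
      seq_append (step_left s) (seq_cons (step_letter s) (seq_cons (flip_code (step_letter s))
        (step_right s)))"
  moreover have "word_decode (step_left s) @ word_decode (step_right s) \<in> P"
    using Q[OF a(1)] by (simp add: word_decode_seq_append)
  ultimately show ?thesis
    using derivation_step.ins[of "word_decode (step_left s)" "word_decode (step_right s)" P
        "letter_decode (step_letter s)" k R]
    by (simp add: word_decode_seq_cons word_decode_seq_append flip_code_eq letter_decode_less)
next
  assume a: "Q (seq_append (step_left s) (seq_cons (step_letter s) (seq_cons (flip_code (step_letter s))
      (step_right s))))" "step_word s = seq_append (step_left s) (step_right s)"
  moreover have "word_decode (step_left s) @ [letter_decode (step_letter s),
      flip_letter (letter_decode (step_letter s))] @ word_decode (step_right s) \<in> P"
    using Q[OF a(1)] by (simp add: word_decode_seq_cons word_decode_seq_append flip_code_eq)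
  ultimately show ?thesis
    by (simp add: word_decode_seq_append derivation_step.del)
qed

lemma coded_step_complete:
  assumes R: "\<And>w. w \<in> R \<Longrightarrow> \<exists>t. PR [word_code w, t]"
    and Q: "\<And>z. z \<in> P \<Longrightarrow> Q (word_code z)" and step: "derivation_step k R P w"
  shows "\<exists>s. step_word s = word_code w \<and> coded_step PR k Q s"
  using step
proof cases
  case rel
  then obtain t where "PR [word_code w, t]" using R by blast
  then show ?thesis by (intro exI[of _ "step_encode (word_code w) 0 0 0 t"]) (simp add: coded_step_def)
next
  case empty
  then show ?thesis by (intro exI[of _ "step_encode 0 0 0 0 0"]) (simp add: coded_step_def)
next
  case (mult u v)
  then show ?thesis using Q
    by (intro exI[of _ "step_encode (word_code w) (word_code u) (word_code v) 0 0"])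
      (simp add: coded_step_def)
next
  case (inv u)
  then show ?thesis using Q
    by (intro exI[of _ "step_encode (word_code w) (word_code u) 0 0 0"]) (simp add: coded_step_def)
next
  case (conj u x)
  have "seq_cons (letter_code x) (seq_append (word_code u) (seq_cons (flip_code (letter_code x)) 0))
      = word_code w"
    using conj(1) by (simp add: flip_code_letter_code
        seq_cons_word_code[of _ "[]", simplified])
  then show ?thesis using Q conj
    by (intro exI[of _ "step_encode (word_code w) (word_code u) 0 (letter_code x) 0"])
      (simp add: coded_step_def letter_code_less_iff)
next
  case (ins u v x)
  have "seq_append (word_code u) (seq_cons (letter_code x) (seq_cons (flip_code (letter_code x))
      (word_code v))) = word_code w"
    using ins(1) by (simp add: flip_code_letter_code)
  then show ?thesis using Q ins
    by (intro exI[of _ "step_encode (word_code w) (word_code u) (word_code v) (letter_code x) 0"])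
      (simp add: coded_step_def letter_code_less_iff)
next
  case (del u x v)
  have "seq_append (word_code u) (seq_cons (letter_code x) (seq_cons (flip_code (letter_code x))
      (word_code v))) = word_code (u @ [x, flip_letter x] @ v)"
    by (simp add: flip_code_letter_code)
  then show ?thesis using Q del
    by (intro exI[of _ "step_encode (word_code w) (word_code u) (word_code v) (letter_code x) 0"])
      (simp add: coded_step_def)
qed

text \<open>\<open>v ! 1\<close> codes a derivation in which the word coded by \<open>v ! 0\<close> occurs.\<close>
definition coded_derivation :: "(nat list \<Rightarrow> bool) \<Rightarrow> nat \<Rightarrow> nat list \<Rightarrow> bool" where
  "coded_derivation PR k = (\<lambda>v.
     (\<forall>j<seq_length (v ! 1).
        coded_step PR k (\<lambda>z. \<exists>i<j. step_word (seq_nth (v ! 1) i) = z) (seq_nth (v ! 1) j)) \<and>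
     (\<exists>j<seq_length (v ! 1). step_word (seq_nth (v ! 1) j) = v ! 0))"

lemma decidable_coded_derivation: "decidable 2 PR \<Longrightarrow> decidable 2 (coded_derivation PR k)"
  unfolding coded_derivation_def coded_step_def
  by (intro computable_seq_intros computable_step_sel decidable_comp2 decidable_bounded_all
      decidable_bounded_ex | assumption | simp)+

lemma coded_derivation_complete:
  assumes R: "\<And>w. w \<in> R \<Longrightarrow> \<exists>t. PR [word_code w, t]"
    and ws: "derivation k R ws" "w \<in> set ws"
  shows "\<exists>t. coded_derivation PR k [word_code w, t]"
proof -
  have "\<forall>j<length ws. \<exists>s. step_word s = word_code (ws ! j) \<and>
      coded_step PR k (\<lambda>z. z \<in> word_code ` set (take j ws)) s"
  proof (intro allI impI)
    fix j assume "j < length ws"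
    then show "\<exists>s. step_word s = word_code (ws ! j) \<and>
        coded_step PR k (\<lambda>z. z \<in> word_code ` set (take j ws)) s"
      using ws(1) by (intro coded_step_complete[OF R, where P = "set (take j ws)"])
        (auto simp: derivation_def)
  qed
  then obtain t where t: "\<And>j. j < length ws \<Longrightarrow> step_word (seq_nth t j) = word_code (ws ! j) \<and>
      coded_step PR k (\<lambda>z. z \<in> word_code ` set (take j ws)) (seq_nth t j)"
    unfolding ex_seq_witness by blast
  define c where "c = list_encode (map (seq_nth t) [0..<length ws])"
  have c: "seq_length c = length ws" "\<And>j. j < length ws \<Longrightarrow> seq_nth c j = seq_nth t j"
    by (simp_all add: c_def)
  have "coded_step PR k (\<lambda>z. \<exists>i<j. step_word (seq_nth c i) = z) (seq_nth c j)"
    if j: "j < length ws" for j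
  proof (rule coded_step_mono)
    show "coded_step PR k (\<lambda>z. z \<in> word_code ` set (take j ws)) (seq_nth c j)"
      using t c j by simp
    show "\<exists>i<j. step_word (seq_nth c i) = z" if z: "z \<in> word_code ` set (take j ws)" for z
    proof -
      obtain i where "i < j" "z = word_code (ws ! i)"
        using z j by (auto simp: in_set_conv_nth)
      then show ?thesis using j t c by (metis order.strict_trans)
    qed
  qed
  moreover obtain j where "j < length ws" "ws ! j = w"
    using ws(2) by (metis in_set_conv_nth)
  ultimately show ?thesis
    using t c by (intro exI[of _ c]) (auto simp: coded_derivation_def)
qed

lemma coded_derivation_sound:
  assumes R: "\<And>n t. PR [n, t] \<Longrightarrow> word_decode n \<in> R"
    and t: "coded_derivation PR k [n, t]"
  shows "\<exists>ws. derivation k R ws \<and> word_decode n \<in> set ws"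
proof -
  define ws where "ws = map (\<lambda>j. word_decode (step_word (seq_nth t j))) [0..<seq_length t]"
  have "derivation k R ws"
    unfolding derivation_def
  proof (intro allI impI)
    fix j assume "j < length ws"
    then have j: "j < seq_length t" by (simp add: ws_def)
    have "derivation_step k R (set (take j ws)) (word_decode (step_word (seq_nth t j)))"
    proof (rule coded_step_sound[OF R])
      show "coded_step PR k (\<lambda>z. \<exists>i<j. step_word (seq_nth t i) = z) (seq_nth t j)"
        using t j by (simp add: coded_derivation_def)
      show "word_decode z \<in> set (take j ws)" if z: "\<exists>i<j. step_word (seq_nth t i) = z" for z
      proof -
        obtain i where "i < j" "step_word (seq_nth t i) = z"
          using z by blast
        then show ?thesis
          using j by (auto simp: ws_def in_set_conv_nth intro!: exI[of _ i])
      qed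
    qed
    then show "derivation_step k R (set (take j ws)) (ws ! j)"
      using j by (simp add: ws_def)
  qed
  moreover have "word_decode n \<in> set ws"
    using t by (auto simp: ws_def coded_derivation_def)
  ultimately show ?thesis by blast
qed

theorem sigma1_normal_closure_words:
  assumes "sigma1 (word_code ` R)"
  shows "sigma1 (word_code ` normal_closure_words k R)"
proof -
  obtain PR where PR: "decidable 2 PR" "\<And>n. n \<in> word_code ` R \<longleftrightarrow> (\<exists>t. PR [n, t])"
    using assms unfolding sigma1_def by blast
  show ?thesis
  proof (rule sigma1I[OF decidable_coded_derivation[OF PR(1)]])
    fix n
    have "n \<in> word_code ` normal_closure_words k R \<longleftrightarrow>
        (\<exists>ws. derivation k R ws \<and> word_decode n \<in> set ws)"
      unfolding word_code_image_iff normal_closure_words_iff_derivation ..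
    also have "\<dots> \<longleftrightarrow> (\<exists>t. coded_derivation PR k [n, t])"
    proof
      assume "\<exists>ws. derivation k R ws \<and> word_decode n \<in> set ws"
      moreover have "\<And>w. w \<in> R \<Longrightarrow> \<exists>t. PR [word_code w, t]"
        using PR(2) by blast
      ultimately show "\<exists>t. coded_derivation PR k [n, t]"
        using coded_derivation_complete[of R PR k _ "word_decode n"] by auto
    next
      assume "\<exists>t. coded_derivation PR k [n, t]"
      then show "\<exists>ws. derivation k R ws \<and> word_decode n \<in> set ws"
        using coded_derivation_sound[of PR R] PR(2) word_code_image_iff by blast
    qed
    finally show "n \<in> word_code ` normal_closure_words k R \<longleftrightarrow> (\<exists>t. coded_derivation PR k [n, t])" .
  qed
qed

section \<open>Word problems\<close>

definition word_problem :: "('a, 'b) monoid_scheme \<Rightarrow> (nat \<Rightarrow> 'a) \<Rightarrow> nat set" where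
  "word_problem G g = word_code ` {w. eval_word G g w = \<one>\<^bsub>G\<^esub>}"

definition word_assignment :: "('a, 'b) monoid_scheme \<Rightarrow> (nat \<Rightarrow> 'a) \<Rightarrow> nat \<Rightarrow> nat \<Rightarrow> 'a" where
  "word_assignment G b us = (\<lambda>i. eval_word G b (word_decode (seq_nth us i)))"

context group
begin

lemma subst_code_mem_word_problem_iff:
  assumes "\<And>i. b i \<in> carrier G"
  shows "subst_code (word_code w) us \<in> word_problem G b \<longleftrightarrow>
    eval_word G (word_assignment G b us) w = \<one>"
  using assms
  by (simp add: word_problem_def word_code_image_iff subst_code_word_code eval_word_word_subst
      word_assignment_def)

lemma word_assignment_closed: "(\<And>i. b i \<in> carrier G) \<Longrightarrow> word_assignment G b us i \<in> carrier G"
  unfolding word_assignment_def by (rule eval_word_closed)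

lemma ex_word_assignment:
  assumes b: "range b \<subseteq> carrier G" "generate G (range b) = carrier G"
    and a: "\<And>i. a i \<in> carrier G"
  obtains us where "\<And>i. i < k \<Longrightarrow> word_assignment G b us i = a i"
proof -
  have "\<forall>i<k. \<exists>n. eval_word G b (word_decode n) = a i"
    using generate_eval_word[of b] a b by (metis range_subsetD word_decode_code)
  then obtain us where "\<forall>i<k. eval_word G b (word_decode (seq_nth us i)) = a i"
    unfolding ex_seq_witness by blast
  then have "\<And>i. i < k \<Longrightarrow> word_assignment G b us i = a i"
    by (simp add: word_assignment_def)
  then show ?thesis by (rule that)
qed

lemma ex_assignment_iff_ex_word_assignment:
  assumes b: "range b \<subseteq> carrier G" "generate G (range b) = carrier G"
    and local: "\<And>a a'. (\<And>i. i < k \<Longrightarrow> a i = a' i) \<Longrightarrow> P a \<longleftrightarrow> P a'"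
  shows "(\<exists>a. (\<forall>i. a i \<in> carrier G) \<and> P a) \<longleftrightarrow> (\<exists>us. P (word_assignment G b us))"
proof
  assume "\<exists>a. (\<forall>i. a i \<in> carrier G) \<and> P a"
  then obtain a where a_carrier: "\<And>i. a i \<in> carrier G" and "P a" by blast
  moreover obtain us where "\<And>i. i < k \<Longrightarrow> word_assignment G b us i = a i"
    using ex_word_assignment[where a = a and k = k, OF b a_carrier] by blast
  ultimately show "\<exists>us. P (word_assignment G b us)"
    using local by metis
next
  assume "\<exists>us. P (word_assignment G b us)"
  then show "\<exists>a. (\<forall>i. a i \<in> carrier G) \<and> P a"
    using word_assignment_closed b(1) by blast
qed

end

lemma solution_set_map_Inr_iff:
  assumes "R \<subseteq> words_over k"
  shows "map a [0..<k] \<in> solution_set G k (map Inr ` R) \<longleftrightarrow>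
    set (map a [0..<k]) \<subseteq> carrier G \<and> (\<forall>r\<in>R. eval_word G a r = \<one>\<^bsub>G\<^esub>)"
proof -
  have "eval_eqn G (map a [0..<k]) (map Inr r) = eval_word G a r" if "r \<in> R" for r
    unfolding eval_eqn_map_Inr
    using that assms by (intro eval_word_cong) (auto simp: words_over_def subset_iff)
  then show ?thesis
    by (auto simp: solution_set_def)
qed

lemma equationally_noetherian_finite_subsystem:
  assumes EN: "equationally_noetherian G" and Rk: "R \<subseteq> words_over k"
  obtains R0 where "finite R0" "R0 \<subseteq> R"
    "\<And>a. (\<And>i. a i \<in> carrier G) \<Longrightarrow> \<forall>r\<in>R0. eval_word G a r = \<one>\<^bsub>G\<^esub> \<Longrightarrow>
       \<forall>r\<in>R. eval_word G a r = \<one>\<^bsub>G\<^esub>"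
proof -
  have eqns: "\<And>e. e \<in> map Inr ` R \<Longrightarrow> is_equation G k e"
    using Rk by (fastforce simp: is_equation_def words_over_def)
  obtain S0 where S0: "S0 \<subseteq> map Inr ` R" "finite S0"
      "solution_set G k (map Inr ` R) = solution_set G k S0"
    using EN[unfolded equationally_noetherian_def, rule_format, OF eqns]
    by blast
  define R0 where "R0 = map Inr -` S0 \<inter> R"
  have "finite (map Inr -` S0)"
    using S0(2) by (rule finite_vimageI) (simp add: inj_mapI)
  then have "finite R0"
    by (simp add: R0_def)
  moreover have R0: "R0 \<subseteq> R" "map Inr ` R0 = S0"
    using S0(1) by (auto simp: R0_def)
  moreover have "\<forall>r\<in>R. eval_word G a r = \<one>\<^bsub>G\<^esub>"
    if "\<And>i. a i \<in> carrier G" "\<forall>r\<in>R0. eval_word G a r = \<one>\<^bsub>G\<^esub>" for a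
    using that solution_set_map_Inr_iff[OF Rk, of a G] S0(3) R0
      solution_set_map_Inr_iff[of R0 k a G] Rk by auto
  ultimately show ?thesis using that by blast
qed

section \<open>Presentations\<close>

locale group_presentation = group H for H (structure) +
  fixes k :: nat and g :: "nat \<Rightarrow> 'a" and R :: "word set"
  assumes gens_closed: "g ` {..<k} \<subseteq> carrier H"
    and gens_generate: "generate H (g ` {..<k}) = carrier H"
    and relators_words: "R \<subseteq> words_over k"
    and eval_word_eq_one_iff:
      "w \<in> words_over k \<Longrightarrow> eval_word H g w = \<one> \<longleftrightarrow> w \<in> normal_closure_words k R"
begin

definition gens :: "nat \<Rightarrow> 'a" where
  "gens = (\<lambda>i. if i < k then g i else \<one>)"

lemma gens_carrier: "gens i \<in> carrier H"
  using gens_closed by (auto simp: gens_def)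

lemma generate_gens: "generate H (range gens) = carrier H"
proof
  show "generate H (range gens) \<subseteq> carrier H"
    using gens_carrier by (intro generate_incl) blast
  have "g ` {..<k} \<subseteq> range gens"
    by (auto simp: gens_def intro!: range_eqI)
  then show "carrier H \<subseteq> generate H (range gens)"
    using gens_generate mono_generate by blast
qed

lemma mem_word_problem_gens_iff:
  "n \<in> word_problem H gens \<longleftrightarrow> filter (\<lambda>l. fst l < k) (word_decode n) \<in> normal_closure_words k R"
proof -
  have "filter (\<lambda>l. fst l < k) (word_decode n) \<in> words_over k"
    by (auto simp: words_over_def)
  then show ?thesis
    using gens_closed
    by (simp add: word_problem_def word_code_image_iff gens_def eval_word_pad_one
        eval_word_eq_one_iff image_subset_iff)
qed

theorem sigma1_word_problem:
  assumes "re_set (word_code ` R)"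
  shows "sigma1 (word_problem H gens)"
proof -
  have "sigma1 {n. restrict_code k n \<in> word_code ` normal_closure_words k R}"
    using sigma1_normal_closure_words[OF re_set_imp_sigma1[OF assms]]
    by (rule sigma1_preimage) (intro computable_restrict_code computable_nth; simp)
  moreover have "{n. restrict_code k n \<in> word_code ` normal_closure_words k R} = word_problem H gens"
    by (auto simp: mem_word_problem_gens_iff word_code_image_iff word_decode_restrict_code)
  ultimately show ?thesis by simp
qed

lemma eval_word_gens: "w \<in> words_over k \<Longrightarrow> eval_word H gens w = eval_word H g w"
  by (intro eval_word_cong) (auto simp: gens_def words_over_def)

lemma not_in_normal_closure_words_iff:
  assumes G: "group G" and res: "residually G H" and w: "w \<in> words_over k"
  shows "w \<notin> normal_closure_words k R \<longleftrightarrow> (\<exists>a. (\<forall>i. a i \<in> carrier G) \<and>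
    (\<forall>r\<in>R. eval_word G a r = \<one>\<^bsub>G\<^esub>) \<and> eval_word G a w \<noteq> \<one>\<^bsub>G\<^esub>)"
proof
  assume "w \<notin> normal_closure_words k R"
  then have "eval_word H gens w \<noteq> \<one>"
    using w by (simp add: eval_word_gens eval_word_eq_one_iff)
  then obtain \<phi> where \<phi>: "\<phi> \<in> hom H G" "\<phi> (eval_word H gens w) \<noteq> \<one>\<^bsub>G\<^esub>"
    using res eval_word_closed[where a = gens, OF gens_carrier] unfolding residually_def by blast
  have hom: "\<phi> (eval_word H gens v) = eval_word G (\<lambda>i. \<phi> (gens i)) v" for v
    using hom_eval_word[where g = gens, OF G is_group \<phi>(1) gens_carrier] .
  show "\<exists>a. (\<forall>i. a i \<in> carrier G) \<and> (\<forall>r\<in>R. eval_word G a r = \<one>\<^bsub>G\<^esub>) \<and>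
      eval_word G a w \<noteq> \<one>\<^bsub>G\<^esub>"
  proof (intro exI conjI ballI allI)
    show "\<phi> (gens i) \<in> carrier G" for i
      using \<phi>(1) gens_carrier by (rule hom_in_carrier)
    show "eval_word G (\<lambda>i. \<phi> (gens i)) r = \<one>\<^bsub>G\<^esub>" if "r \<in> R" for r
    proof -
      have "r \<in> words_over k" "r \<in> normal_closure_words k R"
        using that relators_words by (auto intro: normal_closure_words.rel)
      then have "eval_word H gens r = \<one>"
        by (simp add: eval_word_gens eval_word_eq_one_iff)
      then show ?thesis
        using hom[of r] hom_one[OF \<phi>(1) is_group G] by simp
    qed
    show "eval_word G (\<lambda>i. \<phi> (gens i)) w \<noteq> \<one>\<^bsub>G\<^esub>"
      using \<phi>(2) hom[of w] by simp
  qed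
next
  assume "\<exists>a. (\<forall>i. a i \<in> carrier G) \<and> (\<forall>r\<in>R. eval_word G a r = \<one>\<^bsub>G\<^esub>) \<and>
    eval_word G a w \<noteq> \<one>\<^bsub>G\<^esub>"
  then show "w \<notin> normal_closure_words k R"
    using group.eval_word_normal_closure_words[OF G] by blast
qed

lemma not_mem_word_problem_iff:
  assumes G: "group G" and res: "residually G H"
    and b: "range b \<subseteq> carrier G" "generate G (range b) = carrier G"
    and R0: "R0 \<subseteq> R" "\<And>a. (\<And>i. a i \<in> carrier G) \<Longrightarrow> \<forall>r\<in>R0. eval_word G a r = \<one>\<^bsub>G\<^esub> \<Longrightarrow>
       \<forall>r\<in>R. eval_word G a r = \<one>\<^bsub>G\<^esub>"
  shows "n \<notin> word_problem H gens \<longleftrightarrow> (\<exists>us. (\<forall>r\<in>R0. subst_code (word_code r) us \<in> word_problem G b) \<and>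
    subst_code (restrict_code k n) us \<notin> word_problem G b)"
proof -
  interpret G: group G by fact
  define w where "w = filter (\<lambda>l. fst l < k) (word_decode n)"
  have w: "w \<in> words_over k" "restrict_code k n = word_code w"
    by (simp_all add: w_def words_over_def) (metis word_code_decode word_decode_restrict_code)
  have "n \<notin> word_problem H gens \<longleftrightarrow> (\<exists>a. (\<forall>i. a i \<in> carrier G) \<and>
      (\<forall>r\<in>R0. eval_word G a r = \<one>\<^bsub>G\<^esub>) \<and> eval_word G a w \<noteq> \<one>\<^bsub>G\<^esub>)"
    unfolding mem_word_problem_gens_iff w_def[symmetric] not_in_normal_closure_words_iff[OF G res w(1)]
    using R0 by blast
  also have "\<dots> \<longleftrightarrow> (\<exists>us. (\<forall>r\<in>R0. eval_word G (word_assignment G b us) r = \<one>\<^bsub>G\<^esub>) \<and>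
      eval_word G (word_assignment G b us) w \<noteq> \<one>\<^bsub>G\<^esub>)"
  proof (rule G.ex_assignment_iff_ex_word_assignment[OF b])
    show "(\<forall>r\<in>R0. eval_word G a r = \<one>\<^bsub>G\<^esub>) \<and> eval_word G a w \<noteq> \<one>\<^bsub>G\<^esub> \<longleftrightarrow>
        (\<forall>r\<in>R0. eval_word G a' r = \<one>\<^bsub>G\<^esub>) \<and> eval_word G a' w \<noteq> \<one>\<^bsub>G\<^esub>"
      if "\<And>i. i < k \<Longrightarrow> a i = a' i" for a a'
    proof -
      have "\<forall>v\<in>R0 \<union> {w}. \<forall>l\<in>set v. fst l < k"
        using R0(1) relators_words w(1) by (auto simp: words_over_def)
      then have "\<forall>v\<in>R0 \<union> {w}. eval_word G a v = eval_word G a' v"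
        using that by (metis eval_word_cong)
      then show ?thesis by simp
    qed
  qed
  also have "\<dots> \<longleftrightarrow> (\<exists>us. (\<forall>r\<in>R0. subst_code (word_code r) us \<in> word_problem G b) \<and>
      subst_code (restrict_code k n) us \<notin> word_problem G b)"
    using b(1) by (simp add: w(2) G.subst_code_mem_word_problem_iff[of b] image_subset_iff)
  finally show ?thesis .
qed

theorem sigma1_compl_word_problem:
  assumes G: "group G" and EN: "equationally_noetherian G"
    and b: "range b \<subseteq> carrier G" "generate G (range b) = carrier G"
      "computable_set (word_problem G b)"
    and res: "residually G H"
  shows "sigma1 (- word_problem H gens)"
proof -
  obtain R0 where R0: "finite R0" "R0 \<subseteq> R"
      "\<And>a. (\<And>i. a i \<in> carrier G) \<Longrightarrow> \<forall>r\<in>R0. eval_word G a r = \<one>\<^bsub>G\<^esub> \<Longrightarrow>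
         \<forall>r\<in>R. eval_word G a r = \<one>\<^bsub>G\<^esub>"
    using equationally_noetherian_finite_subsystem[OF EN relators_words] by blast
  obtain rs where rs: "set rs = R0"
    using R0(1) finite_list by blast
  show ?thesis
  proof (rule sigma1I)
    show "decidable 2 (\<lambda>v. (\<forall>r\<in>set rs. subst_code (word_code r) (v ! 1) \<in> word_problem G b) \<and>
        subst_code (restrict_code k (v ! 0)) (v ! 1) \<notin> word_problem G b)"
      using b(3) by (intro decidable_conj decidable_not decidable_list_all decidable_mem_computable_set
          computable_subst_code computable_restrict_code computable_const computable_nth; simp)
    show "n \<in> - word_problem H gens \<longleftrightarrow> (\<exists>t. (\<forall>r\<in>set rs. subst_code (word_code r) ([n, t] ! 1)
        \<in> word_problem G b) \<and> subst_code (restrict_code k ([n, t] ! 0)) ([n, t] ! 1) \<notin> word_problem G b)"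
      for n
      using not_mem_word_problem_iff[OF G res b(1,2) R0(2,3)] by (simp add: rs)
  qed
qed

end

theorem mainTheorem4:
  fixes G :: "('g, 'c) monoid_scheme" and H :: "('h, 'd) monoid_scheme"
  assumes "group G" and "group H"
    and "equationally_noetherian G"
    and "solvable_word_problem G"
    and "finitely_generated_group H"
    and "recursively_presented H"
    and "residually G H"
  shows "solvable_word_problem H"
proof -
  \<comment> \<open>Finite generation of \<open>H\<close> is already part of being recursively presented.\<close>
  obtain b where b: "range b \<subseteq> carrier G" "generate G (range b) = carrier G"
      "computable_set (word_problem G b)"
    using assms(4) unfolding solvable_word_problem_def word_problem_def by blast
  obtain k g R where pres: "group_presentation H k g R" and R: "re_set (word_code ` R)"
    using assms(2,6) unfolding recursively_presented_def group_presentation_def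
      group_presentation_axioms_def by blast
  interpret group_presentation H k g R by (fact pres)
  have "computable_set (word_problem H gens)"
    using sigma1_word_problem[OF R] sigma1_compl_word_problem[OF assms(1,3) b assms(7)]
    by (rule computable_set_if_sigma1_compl)
  then show ?thesis
    unfolding solvable_word_problem_def word_problem_def
    using gens_carrier generate_gens by blast
qed
end
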